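(* Let $\mathbf{x}\in(\Sigma^* )^\circ$ be arbitrary and let $\mathbf{s}\in\mathbb{R}^U$. Define the block-diagonal symmetric matrix \[ \mathbf{S}(\mathbf{x},\mathbf{s}) := \Lambda(\mathbf{x})^{-1}\,\Lambda\!\left(H(\mathbf{x})^{-1}\mathbf{s}\right)\Lambda(\mathbf{x})^{-1}. \] Then $\Lambda^*(\mathbf{S}(\mathbf{x},\mathbf{s}))=\mathbf{s}$. Moreover, for $\mathbf{s}\in\Sigma$, $\mathbf{x}$ is a dual certificate of $\mathbf{s}$ (i.e. $H(\mathbf{x})^{-1}\mathbf{s}\in\Sigma^*$) if and only if $\mathbf{S}(\mathbf{x},\mathbf{s})\succeq \mathbf{0}$.
   Context: Fix nonzero real polynomials $g_1,\dots,g_m$ in $n$ variables and nonnegative integers $d_1,\dots,d_m$. Let $\mathcal V$ be the real vector space of polynomials of the form $\sum_{i=1}^m g_i r_i$ with each $r_i$ a polynomial of degree at most $2d_i$, and let $\Sigma\subseteq\mathcal V$ be the cone of weighted sums of squares $\sum_{i=1}^m g_i\sigma_i$, where each $\sigma_i$ is a sum of squares of polynomials of degree at most $d_i$. Assume $\Sigma$ is a proper cone (closed, convex, pointed, full-dimensional in $\mathcal V$). Fix an ordered basis $\mathbf q=(q_1,\dots,q_U)$ of $\mathcal V$ and identify $\mathcal V$ and its dual with $\mathbb R^U$ (coefficient vectors), with the standard inner product and Euclidean norm $\|\cdot\|$; $\Sigma^*=\{\mathbf x:\mathbf x^T\mathbf s\ge 0\ \forall \mathbf s\in\Sigma\}$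 is the dual cone and $K^\circ$ denotes the interior of $K$. For each $i$ fix an ordered basis $\mathbf p_i=(p_{i,1},\dots,p_{i,L_i})$ of the polynomials of degree at most $d_i$, and let $\Lambda_i:\mathbb R^U\to\mathbb S^{L_i}$ be the unique linear map with $\sum_{u=1}^U q_u\Lambda_i(\mathbf e_u)=g_i\mathbf p_i\mathbf p_i^T$ (as matrices of polynomials). Let $\Lambda=\Lambda_1\oplus\cdots\oplus\Lambda_m$, mapping $\mathbb R^U$ into block-diagonal symmetric matrices, and $\Lambda^*$ its adjoint with respect to the trace inner product. Then $\Sigma^*=\{\mathbf x:\Lambda(\mathbf x)\succeq 0\}$ and $(\Sigma^* )^\circ=\{\mathbf x:\Lambda(\mathbf x)\succ0\}$. Let $f(\mathbf x)=-\ln\det\Lambda(\mathbf x)$ on $(\Sigma^* )^\circ$; its Hessian $H(\mathbf x)$ is the positive definite operator $H(\mathbf x)\mathbf w=\Lambda^*(\Lambda(\mathbf x)^{-1}\Lambda(\mathbf w)\Lambda(\mathbf x)^{-1})$. A vector $\mathbf x\in(\Sigma^* )^\circ$ is called a dual certificate of $\mathbf s\in\Sigma$ if $H(\mathbf x)^{-1}\mathbf s\in\Sigma^*$. *)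

theory Defs
  imports "HOL-Analysis.Analysis" "Jordan_Normal_Form.Matrix"
begin

text \<open>Points of R^n are functions 'n => real ('n finite); real polynomial functions in n
  variables are represented by their (polynomial) functions R^n -> R.  Coefficient vectors
  in R^U are functions 'u => real ('u finite, CARD('u) = U), with the product (= Euclidean)
  topology.\<close>

definition monomial :: "('n::finite \<Rightarrow> nat) \<Rightarrow> ('n \<Rightarrow> real) \<Rightarrow> real" where
  "monomial \<alpha> z = (\<Prod>i\<in>UNIV. z i ^ \<alpha> i)"

definition exps_le :: "nat \<Rightarrow> ('n::finite \<Rightarrow> nat) set" where
  "exps_le d = {\<alpha>. (\<Sum>i\<in>UNIV. \<alpha> i) \<le> d}"

definition poly_deg_le :: "nat \<Rightarrow> (('n::finite \<Rightarrow> real) \<Rightarrow> real) \<Rightarrow> bool" where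
  "poly_deg_le d f \<longleftrightarrow> (\<exists>c. f = (\<lambda>z. \<Sum>\<alpha>\<in>exps_le d. c \<alpha> * monomial \<alpha> z))"

definition is_poly :: "(('n::finite \<Rightarrow> real) \<Rightarrow> real) \<Rightarrow> bool" where
  "is_poly f \<longleftrightarrow> (\<exists>d. poly_deg_le d f)"

definition sos_deg_le :: "nat \<Rightarrow> (('n::finite \<Rightarrow> real) \<Rightarrow> real) \<Rightarrow> bool" where
  "sos_deg_le d \<sigma> \<longleftrightarrow>
     (\<exists>hs. (\<forall>h\<in>set hs. poly_deg_le d h) \<and> \<sigma> = (\<lambda>z. \<Sum>h\<leftarrow>hs. (h z)\<^sup>2))"

definition Vspace :: "(nat \<Rightarrow> ('n::finite \<Rightarrow> real) \<Rightarrow> real) \<Rightarrow> (nat \<Rightarrow> nat) \<Rightarrow> nat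
    \<Rightarrow> (('n \<Rightarrow> real) \<Rightarrow> real) set" where
  "Vspace g d m = {f. \<exists>r. (\<forall>i<m. poly_deg_le (2 * d i) (r i)) \<and>
                          f = (\<lambda>z. \<Sum>i<m. g i z * r i z)}"

definition WSOS :: "(nat \<Rightarrow> ('n::finite \<Rightarrow> real) \<Rightarrow> real) \<Rightarrow> (nat \<Rightarrow> nat) \<Rightarrow> nat
    \<Rightarrow> (('n \<Rightarrow> real) \<Rightarrow> real) set" where
  "WSOS g d m = {f. \<exists>\<sigma>. (\<forall>i<m. sos_deg_le (d i) (\<sigma> i)) \<and>
                          f = (\<lambda>z. \<Sum>i<m. g i z * \<sigma> i z)}"

definition poly_of :: "('u::finite \<Rightarrow> ('n \<Rightarrow> real) \<Rightarrow> real) \<Rightarrow> ('u \<Rightarrow> real)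
    \<Rightarrow> ('n \<Rightarrow> real) \<Rightarrow> real" where
  "poly_of q s = (\<lambda>z. \<Sum>u\<in>UNIV. s u * q u z)"

definition is_basis_fun :: "('u::finite \<Rightarrow> ('n \<Rightarrow> real) \<Rightarrow> real)
    \<Rightarrow> (('n \<Rightarrow> real) \<Rightarrow> real) set \<Rightarrow> bool" where
  "is_basis_fun q V \<longleftrightarrow> (\<forall>u. q u \<in> V) \<and> (\<forall>f\<in>V. \<exists>s. f = poly_of q s) \<and>
     (\<forall>s. poly_of q s = (\<lambda>z. 0) \<longrightarrow> s = (\<lambda>u. 0))"

definition is_basis_list :: "(('n \<Rightarrow> real) \<Rightarrow> real) list
    \<Rightarrow> ((('n \<Rightarrow> real) \<Rightarrow> real) \<Rightarrow> bool) \<Rightarrow> bool" where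
  "is_basis_list B P \<longleftrightarrow> (\<forall>b\<in>set B. P b) \<and>
     (\<forall>f. P f \<longrightarrow> (\<exists>c. f = (\<lambda>z. \<Sum>j<length B. c j * (B ! j) z))) \<and>
     (\<forall>c. (\<lambda>z. \<Sum>j<length B. c j * (B ! j) z) = (\<lambda>z. 0) \<longrightarrow> (\<forall>j<length B. c j = 0))"

definition coords :: "('u::finite \<Rightarrow> ('n \<Rightarrow> real) \<Rightarrow> real) \<Rightarrow> (('n \<Rightarrow> real) \<Rightarrow> real)
    \<Rightarrow> 'u \<Rightarrow> real" where
  "coords q f = (THE s. f = poly_of q s)"

text \<open>Lambda_i: the linear map with sum_u q_u Lambda_i(e_u) = g_i p_i p_i^T\<close>
definition Lam_i :: "(nat \<Rightarrow> ('n::finite \<Rightarrow> real) \<Rightarrow> real) \<Rightarrow> (nat \<Rightarrow> (('n \<Rightarrow> real) \<Rightarrow> real) list)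
    \<Rightarrow> ('u::finite \<Rightarrow> ('n \<Rightarrow> real) \<Rightarrow> real) \<Rightarrow> nat \<Rightarrow> ('u \<Rightarrow> real) \<Rightarrow> real mat" where
  "Lam_i g p q i x = mat (length (p i)) (length (p i))
     (\<lambda>(j, k). \<Sum>u\<in>UNIV. x u * coords q (\<lambda>z. g i z * (p i ! j) z * (p i ! k) z) u)"

definition Lam :: "(nat \<Rightarrow> ('n::finite \<Rightarrow> real) \<Rightarrow> real) \<Rightarrow> (nat \<Rightarrow> (('n \<Rightarrow> real) \<Rightarrow> real) list)
    \<Rightarrow> ('u::finite \<Rightarrow> ('n \<Rightarrow> real) \<Rightarrow> real) \<Rightarrow> nat \<Rightarrow> ('u \<Rightarrow> real) \<Rightarrow> real mat" where
  "Lam g p q m x = diag_block_mat (map (\<lambda>i. Lam_i g p q i x) [0..<m])"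

definition unit_coord :: "'u \<Rightarrow> 'u \<Rightarrow> real" where
  "unit_coord u = (\<lambda>v. if v = u then 1 else 0)"

definition trace_mat :: "real mat \<Rightarrow> real" where
  "trace_mat A = (\<Sum>i<dim_row A. A $$ (i, i))"

text \<open>adjoint of Lambda w.r.t. the trace inner product <A,B> = tr(A^T B) and the standard
  inner product on R^U: (Lambda^* S)_u = <Lambda(e_u), S>\<close>
definition Lam_adj :: "(nat \<Rightarrow> ('n::finite \<Rightarrow> real) \<Rightarrow> real) \<Rightarrow> (nat \<Rightarrow> (('n \<Rightarrow> real) \<Rightarrow> real) list)
    \<Rightarrow> ('u::finite \<Rightarrow> ('n \<Rightarrow> real) \<Rightarrow> real) \<Rightarrow> nat \<Rightarrow> real mat \<Rightarrow> 'u \<Rightarrow> real" where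
  "Lam_adj g p q m S = (\<lambda>u. trace_mat (transpose_mat (Lam g p q m (unit_coord u)) * S))"

definition minv :: "real mat \<Rightarrow> real mat" where
  "minv A = (SOME B. inverts_mat A B \<and> inverts_mat B A)"

text \<open>Hessian of -ln det Lambda(x): H(x) w = Lambda^*(Lambda(x)^-1 Lambda(w) Lambda(x)^-1)\<close>
definition Hop :: "(nat \<Rightarrow> ('n::finite \<Rightarrow> real) \<Rightarrow> real) \<Rightarrow> (nat \<Rightarrow> (('n \<Rightarrow> real) \<Rightarrow> real) list)
    \<Rightarrow> ('u::finite \<Rightarrow> ('n \<Rightarrow> real) \<Rightarrow> real) \<Rightarrow> nat \<Rightarrow> ('u \<Rightarrow> real) \<Rightarrow> ('u \<Rightarrow> real) \<Rightarrow> 'u \<Rightarrow> real" where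
  "Hop g p q m x w = Lam_adj g p q m
      (minv (Lam g p q m x) * Lam g p q m w * minv (Lam g p q m x))"

definition Hinv :: "(nat \<Rightarrow> ('n::finite \<Rightarrow> real) \<Rightarrow> real) \<Rightarrow> (nat \<Rightarrow> (('n \<Rightarrow> real) \<Rightarrow> real) list)
    \<Rightarrow> ('u::finite \<Rightarrow> ('n \<Rightarrow> real) \<Rightarrow> real) \<Rightarrow> nat \<Rightarrow> ('u \<Rightarrow> real) \<Rightarrow> ('u \<Rightarrow> real) \<Rightarrow> 'u \<Rightarrow> real" where
  "Hinv g p q m x s = (THE w. Hop g p q m x w = s)"

definition Smat :: "(nat \<Rightarrow> ('n::finite \<Rightarrow> real) \<Rightarrow> real) \<Rightarrow> (nat \<Rightarrow> (('n \<Rightarrow> real) \<Rightarrow> real) list)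
    \<Rightarrow> ('u::finite \<Rightarrow> ('n \<Rightarrow> real) \<Rightarrow> real) \<Rightarrow> nat \<Rightarrow> ('u \<Rightarrow> real) \<Rightarrow> ('u \<Rightarrow> real) \<Rightarrow> real mat" where
  "Smat g p q m x s = minv (Lam g p q m x) * Lam g p q m (Hinv g p q m x s) * minv (Lam g p q m x)"

definition Scone :: "(nat \<Rightarrow> ('n::finite \<Rightarrow> real) \<Rightarrow> real) \<Rightarrow> (nat \<Rightarrow> nat) \<Rightarrow> nat
    \<Rightarrow> ('u::finite \<Rightarrow> ('n \<Rightarrow> real) \<Rightarrow> real) \<Rightarrow> ('u \<Rightarrow> real) set" where
  "Scone g d m q = {s. poly_of q s \<in> WSOS g d m}"

definition Sdual :: "(nat \<Rightarrow> ('n::finite \<Rightarrow> real) \<Rightarrow> real) \<Rightarrow> (nat \<Rightarrow> nat) \<Rightarrow> nat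
    \<Rightarrow> ('u::finite \<Rightarrow> ('n \<Rightarrow> real) \<Rightarrow> real) \<Rightarrow> ('u \<Rightarrow> real) set" where
  "Sdual g d m q = {x. \<forall>s\<in>Scone g d m q. (\<Sum>u\<in>UNIV. x u * s u) \<ge> 0}"

definition proper_cone :: "('u::finite \<Rightarrow> real) set \<Rightarrow> bool" where
  "proper_cone C \<longleftrightarrow> closed C \<and>
     (\<forall>a\<in>C. \<forall>b\<in>C. \<forall>t::real. 0 \<le> t \<and> t \<le> 1 \<longrightarrow> (\<lambda>u. t * a u + (1 - t) * b u) \<in> C) \<and>
     (\<forall>a\<in>C. \<forall>t::real. 0 \<le> t \<longrightarrow> (\<lambda>u. t * a u) \<in> C) \<and>
     (\<forall>a. a \<in> C \<and> (\<lambda>u. - a u) \<in> C \<longrightarrow> a = (\<lambda>u. 0)) \<and>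
     interior C \<noteq> {}"

definition psd :: "real mat \<Rightarrow> bool" where
  "psd A \<longleftrightarrow> A \<in> carrier_mat (dim_row A) (dim_row A) \<and> transpose_mat A = A \<and>
     (\<forall>v\<in>carrier_vec (dim_row A). v \<bullet> (A *\<^sub>v v) \<ge> 0)"

end

theory Submission
  imports Defs "HOL-Computational_Algebra.Polynomial" "Jordan_Normal_Form.Determinant"
begin

(* By definition of S, Lambda^*(S(x,s)) = H(x)(H(x)^-1 s), so the first claim amounts to the
   invertibility of H(x).  The quadratic form of the i-th block of Lambda(w) at v is the value of
   w at g_i h^2, where h = sum_j v_j p_ij.  For x interior to Sigma^* this value is positive when
   v <> 0, since g_i h^2 is then a nonzero element of Sigma; so Lambda(x) is positive definite.
   Writing Lambda(x)^-1 = R^T R turns <w, H(x) w> = tr(Lambda(x)^-1 Lambda(w) Lambda(x)^-1 Lambda(w))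
   into a sum of squares vanishing only for Lambda(w) = 0, and Lambda is injective because Sigma
   is full-dimensional.  Hence H(x) is injective, and bijective by finite dimensionality.
   The same description of the blocks gives Sigma^* = {w. Lambda(w) psd}, and S(x,s) is congruent
   to Lambda(H(x)^-1 s) via the symmetric invertible matrix Lambda(x)^-1, which preserves
   semidefiniteness.  The equivalence holds for every s. *)

section \<open>Polynomials of bounded degree\<close>

lemma finite_exps_le: "finite (exps_le d :: ('n::finite \<Rightarrow> nat) set)"
proof (rule finite_subset)
  show "exps_le d \<subseteq> PiE (UNIV::'n set) (\<lambda>_. {..d})"
  proof
    fix \<alpha> :: "'n \<Rightarrow> nat"
    assume "\<alpha> \<in> exps_le d"
    then have "\<alpha> i \<le> d" for i
      using member_le_sum[of i UNIV \<alpha>] by (simp add: exps_le_def)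
    then show "\<alpha> \<in> PiE UNIV (\<lambda>_. {..d})" by auto
  qed
qed (rule finite_PiE, auto)

lemma poly_deg_le_zero: "poly_deg_le d (\<lambda>z. 0)"
  unfolding poly_deg_le_def by (rule exI[of _ "\<lambda>_. 0"]) simp

lemma poly_deg_le_add:
  assumes "poly_deg_le d f" "poly_deg_le d g"
  shows "poly_deg_le d (\<lambda>z. f z + g z)"
proof -
  obtain c c' where "f = (\<lambda>z. \<Sum>\<alpha>\<in>exps_le d. c \<alpha> * monomial \<alpha> z)"
    and "g = (\<lambda>z. \<Sum>\<alpha>\<in>exps_le d. c' \<alpha> * monomial \<alpha> z)"
    using assms poly_deg_le_def by blast
  then show ?thesis unfolding poly_deg_le_def
    by (intro exI[of _ "\<lambda>\<alpha>. c \<alpha> + c' \<alpha>"]) (simp add: distrib_right sum.distrib)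
qed

lemma poly_deg_le_cmult:
  assumes "poly_deg_le d f"
  shows "poly_deg_le d (\<lambda>z. a * f z)"
proof -
  obtain c where "f = (\<lambda>z. \<Sum>\<alpha>\<in>exps_le d. c \<alpha> * monomial \<alpha> z)"
    using assms poly_deg_le_def by blast
  then show ?thesis unfolding poly_deg_le_def
    by (intro exI[of _ "\<lambda>\<alpha>. a * c \<alpha>"]) (simp add: sum_distrib_left mult.assoc)
qed

lemma poly_deg_le_sum:
  "(\<And>a. a \<in> A \<Longrightarrow> poly_deg_le d (f a)) \<Longrightarrow> poly_deg_le d (\<lambda>z. \<Sum>a\<in>A. f a z)"
  by (induction A rule: infinite_finite_induct) (auto simp: poly_deg_le_zero poly_deg_le_add)

lemma poly_deg_le_sum_list:
  "(\<And>h. h \<in> set hs \<Longrightarrow> poly_deg_le d (f h)) \<Longrightarrow> poly_deg_le d (\<lambda>z. \<Sum>h\<leftarrow>hs. f h z)"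
  by (induction hs) (auto simp: poly_deg_le_zero poly_deg_le_add)

lemma poly_deg_le_monomial:
  assumes "\<alpha> \<in> exps_le d"
  shows "poly_deg_le d (monomial \<alpha>)"
proof -
  have "monomial \<alpha> = (\<lambda>z. \<Sum>\<beta>\<in>exps_le d. (if \<beta> = \<alpha> then 1 else 0) * monomial \<beta> z)"
    using assms by (simp add: finite_exps_le if_distrib[of "\<lambda>c. c * _"] cong: if_cong)
  then show ?thesis unfolding poly_deg_le_def by (rule exI[of _ "\<lambda>\<beta>. if \<beta> = \<alpha> then 1 else 0"])
qed

lemma monomial_mult: "monomial \<alpha> z * monomial \<beta> z = monomial (\<lambda>i. \<alpha> i + \<beta> i) z"
  unfolding monomial_def by (simp add: power_add prod.distrib)

lemma poly_deg_le_mult: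
  fixes f g :: "('n::finite \<Rightarrow> real) \<Rightarrow> real"
  assumes "poly_deg_le d f" "poly_deg_le e g"
  shows "poly_deg_le (d + e) (\<lambda>z. f z * g z)"
proof -
  obtain c c' where f: "f = (\<lambda>z. \<Sum>\<alpha>\<in>exps_le d. c \<alpha> * monomial \<alpha> z)"
    and g: "g = (\<lambda>z. \<Sum>\<beta>\<in>exps_le e. c' \<beta> * monomial \<beta> z)"
    using assms poly_deg_le_def by blast
  have fg: "(\<lambda>z. f z * g z) = (\<lambda>z. \<Sum>\<alpha>\<in>exps_le d. \<Sum>\<beta>\<in>exps_le e.
          (c \<alpha> * c' \<beta>) * monomial (\<lambda>i. \<alpha> i + \<beta> i) z)"
    unfolding f g sum_product by (intro ext sum.cong refl) (simp add: monomial_mult[symmetric] mult_ac)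
  show ?thesis unfolding fg
  proof (intro poly_deg_le_sum poly_deg_le_cmult poly_deg_le_monomial)
    fix \<alpha> \<beta> :: "'n \<Rightarrow> nat" assume "\<alpha> \<in> exps_le d" "\<beta> \<in> exps_le e"
    then show "(\<lambda>i. \<alpha> i + \<beta> i) \<in> exps_le (d + e)" by (simp add: exps_le_def sum.distrib)
  qed
qed

lemma poly_deg_le_square: "poly_deg_le d h \<Longrightarrow> poly_deg_le (2 * d) (\<lambda>z. (h z)\<^sup>2)"
  using poly_deg_le_mult[of d h d h] by (simp add: mult_2 power2_eq_square)

lemma sos_deg_le_imp_poly_deg_le: "sos_deg_le d \<sigma> \<Longrightarrow> poly_deg_le (2 * d) \<sigma>"
  unfolding sos_deg_le_def by (auto intro!: poly_deg_le_sum_list poly_deg_le_square)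

lemma poly_deg_le_on_line:
  assumes "poly_deg_le d f"
  obtains P where "\<And>t. f (\<lambda>i. a i + t * c i) = poly P t"
proof -
  obtain b where "f = (\<lambda>z. \<Sum>\<alpha>\<in>exps_le d. b \<alpha> * monomial \<alpha> z)"
    using assms poly_deg_le_def by blast
  then have "f (\<lambda>i. a i + t * c i) =
      poly (\<Sum>\<alpha>\<in>exps_le d. Polynomial.smult (b \<alpha>) (\<Prod>i\<in>UNIV. [:a i, c i:] ^ \<alpha> i)) t" for t
    by (simp add: poly_sum poly_prod monomial_def mult.commute)
  then show ?thesis using that by blast
qed

text \<open>On the line through a point where \<open>f \<noteq> 0\<close> and a point where \<open>g \<noteq> 0\<close>, both
  factors restrict to nonzero univariate polynomials.\<close>
lemma is_poly_mult_nonzero: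
  assumes "is_poly f" "is_poly g" "f \<noteq> (\<lambda>z. 0)" "g \<noteq> (\<lambda>z. 0)"
  shows "(\<lambda>z. f z * g z) \<noteq> (\<lambda>z. 0)"
proof
  assume fg: "(\<lambda>z. f z * g z) = (\<lambda>z. 0)"
  obtain a where a: "f a \<noteq> 0" using assms(3) by auto
  obtain b where b: "g b \<noteq> 0" using assms(4) by auto
  obtain d e where df: "poly_deg_le d f" and eg: "poly_deg_le e g"
    using assms(1,2) is_poly_def by blast
  obtain P where P: "\<And>t. f (\<lambda>i. a i + t * (b i - a i)) = poly P t"
    using poly_deg_le_on_line[OF df, where a=a and c="\<lambda>i. b i - a i"] by blast
  obtain Q where Q: "\<And>t. g (\<lambda>i. a i + t * (b i - a i)) = poly Q t"
    using poly_deg_le_on_line[OF eg, where a=a and c="\<lambda>i. b i - a i"] by blast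
  have "P \<noteq> 0" using P[of 0] a by auto
  moreover have "Q \<noteq> 0" using Q[of 1] b by auto
  ultimately have "P * Q \<noteq> 0" by simp
  then obtain t where "poly (P * Q) t \<noteq> 0" using poly_all_0_iff_0 by blast
  then show False using fun_cong[OF fg, of "\<lambda>i. a i + t * (b i - a i)"] P Q by simp
qed

section \<open>Coordinates in the basis of \<open>V\<close>\<close>

definition dual_value :: "('u::finite \<Rightarrow> ('n \<Rightarrow> real) \<Rightarrow> real) \<Rightarrow> ('u \<Rightarrow> real)
    \<Rightarrow> (('n \<Rightarrow> real) \<Rightarrow> real) \<Rightarrow> real" where
  "dual_value q x f = (\<Sum>u\<in>UNIV. x u * coords q f u)"

lemma poly_of_inj:
  assumes "is_basis_fun q V" "poly_of q s = poly_of q t"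
  shows "s = t"
proof -
  have "poly_of q (\<lambda>u. s u - t u) = (\<lambda>z. 0)"
    using assms(2) unfolding poly_of_def by (simp add: sum_subtractf left_diff_distrib fun_eq_iff)
  then have "(\<lambda>u. s u - t u) = (\<lambda>u. 0)"
    using assms(1) unfolding is_basis_fun_def by blast
  then show ?thesis by (simp add: fun_eq_iff)
qed

lemma coords_poly_of: "is_basis_fun q V \<Longrightarrow> coords q (poly_of q s) = s"
  unfolding coords_def by (rule the_equality) (auto dest: poly_of_inj)

lemma poly_of_coords:
  assumes "is_basis_fun q V" "f \<in> V"
  shows "poly_of q (coords q f) = f"
proof -
  obtain s where "f = poly_of q s" using assms unfolding is_basis_fun_def by blast
  then show ?thesis using coords_poly_of[OF assms(1)] by simp
qed

lemma coords_sum: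
  assumes q: "is_basis_fun q V" and "finite A" and f: "\<And>a. a \<in> A \<Longrightarrow> f a \<in> V"
  shows "coords q (\<lambda>z. \<Sum>a\<in>A. c a * f a z) = (\<lambda>u. \<Sum>a\<in>A. c a * coords q (f a) u)"
proof -
  have "poly_of q (\<lambda>u. \<Sum>a\<in>A. c a * coords q (f a) u)
      = (\<lambda>z. \<Sum>a\<in>A. c a * poly_of q (coords q (f a)) z)"
    unfolding poly_of_def
    by (simp add: sum_distrib_left sum_distrib_right mult.assoc sum.swap[of _ UNIV])
  also have "\<dots> = (\<lambda>z. \<Sum>a\<in>A. c a * f a z)"
    using poly_of_coords[OF q f] by simp
  finally have "poly_of q (\<lambda>u. \<Sum>a\<in>A. c a * coords q (f a) u) = (\<lambda>z. \<Sum>a\<in>A. c a * f a z)" .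
  from arg_cong[OF this, of "coords q"] show ?thesis
    unfolding coords_poly_of[OF q] by (rule sym)
qed

lemma dual_value_sum:
  assumes "is_basis_fun q V" "finite A" "\<And>a. a \<in> A \<Longrightarrow> f a \<in> V"
  shows "dual_value q x (\<lambda>z. \<Sum>a\<in>A. c a * f a z) = (\<Sum>a\<in>A. c a * dual_value q x (f a))"
  using coords_sum[OF assms, where c=c] unfolding dual_value_def
  by (simp add: sum_distrib_left mult_ac sum.swap[of _ UNIV])

lemma weighted_poly_in_Vspace:
  assumes "i < m" "poly_deg_le (2 * d i) r"
  shows "(\<lambda>z. g i z * r z) \<in> Vspace g d m"
  unfolding Vspace_def
proof (intro CollectI exI conjI allI impI)
  let ?r = "\<lambda>k z. if k = i then r z else 0"
  show "poly_deg_le (2 * d k) (?r k)" for k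
    using assms(2) by (cases "k = i") (auto simp: poly_deg_le_zero)
  show "(\<lambda>z. g i z * r z) = (\<lambda>z. \<Sum>k<m. g k z * ?r k z)"
    using assms(1) by (simp add: if_distrib[of "\<lambda>c. _ * c"] sum.delta cong: if_cong)
qed

lemma weighted_square_in_Scone:
  assumes q: "is_basis_fun q (Vspace g d m)" and "i < m" and h: "poly_deg_le (d i) h"
  shows "coords q (\<lambda>z. g i z * (h z)\<^sup>2) \<in> Scone g d m q"
proof -
  let ?\<sigma> = "\<lambda>k z. if k = i then (h z)\<^sup>2 else 0"
  have "sos_deg_le (d k) (?\<sigma> k)" for k
  proof (cases "k = i")
    case True
    then show ?thesis unfolding sos_deg_le_def using h by (auto intro!: exI[of _ "[h]"])
  next
    case False
    then show ?thesis unfolding sos_deg_le_def by (auto intro!: exI[of _ "[]"])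
  qed
  moreover have "(\<lambda>z. g i z * (h z)\<^sup>2) = (\<lambda>z. \<Sum>k<m. g k z * ?\<sigma> k z)"
    using \<open>i < m\<close> by (simp add: if_distrib[of "\<lambda>c. _ * c"] sum.delta cong: if_cong)
  ultimately have "(\<lambda>z. g i z * (h z)\<^sup>2) \<in> WSOS g d m"
    unfolding WSOS_def by (intro CollectI exI[of _ ?\<sigma>]) simp
  moreover have "(\<lambda>z. g i z * (h z)\<^sup>2) \<in> Vspace g d m"
    using weighted_poly_in_Vspace[where g=g and d=d, OF \<open>i < m\<close> poly_deg_le_square[OF h]] .
  ultimately show ?thesis
    unfolding Scone_def using poly_of_coords[OF q] by simp
qed

section \<open>Quadratic forms\<close>

definition entries :: "real mat \<Rightarrow> nat \<Rightarrow> nat \<Rightarrow> real" where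
  "entries A i j = A $$ (i, j)"

definition quad_form :: "nat \<Rightarrow> (nat \<Rightarrow> nat \<Rightarrow> real) \<Rightarrow> (nat \<Rightarrow> real) \<Rightarrow> real" where
  "quad_form n M v = (\<Sum>i<n. \<Sum>j<n. v i * M i j * v j)"

definition sym_form :: "nat \<Rightarrow> (nat \<Rightarrow> nat \<Rightarrow> real) \<Rightarrow> bool" where
  "sym_form n M \<longleftrightarrow> (\<forall>i<n. \<forall>j<n. M i j = M j i)"

definition psd_form :: "nat \<Rightarrow> (nat \<Rightarrow> nat \<Rightarrow> real) \<Rightarrow> bool" where
  "psd_form n M \<longleftrightarrow> (\<forall>v. 0 \<le> quad_form n M v)"

definition pd_form :: "nat \<Rightarrow> (nat \<Rightarrow> nat \<Rightarrow> real) \<Rightarrow> bool" where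
  "pd_form n M \<longleftrightarrow> (\<forall>v. (\<exists>j<n. v j \<noteq> 0) \<longrightarrow> 0 < quad_form n M v)"

lemma quad_form_cong:
  "(\<And>i. i < n \<Longrightarrow> v i = w i) \<Longrightarrow> (\<And>i j. i < n \<Longrightarrow> j < n \<Longrightarrow> M i j = M' i j)
    \<Longrightarrow> quad_form n M v = quad_form n M' w"
  unfolding quad_form_def by (intro sum.cong refl) auto

lemma quad_form_zero_vec: "(\<And>i. i < n \<Longrightarrow> v i = 0) \<Longrightarrow> quad_form n M v = 0"
  unfolding quad_form_def by simp

lemma pd_form_imp_psd_form: "pd_form n M \<Longrightarrow> psd_form n M"
  unfolding pd_form_def psd_form_def by (metis less_eq_real_def quad_form_zero_vec)

lemma pd_form_quad_form_eq_0: "pd_form n M \<Longrightarrow> quad_form n M v = 0 \<Longrightarrow> j < n \<Longrightarrow> v j = 0"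
  unfolding pd_form_def by force

lemma sum_unit_mult: "k < (n::nat) \<Longrightarrow> (\<Sum>i<n. (if i = k then 1 else 0) * f i) = (f k :: real)"
  by (simp add: if_distrib[of "\<lambda>x. x * _"] sum.delta cong: if_cong)

lemma quad_form_add_unit:
  assumes s: "sym_form n M" and k: "k < n"
  shows "quad_form n M (\<lambda>i. v i + c * (if i = k then 1 else 0))
    = quad_form n M v + 2 * c * (\<Sum>j<n. v j * M k j) + c\<^sup>2 * M k k"
proof -
  let ?e = "\<lambda>i::nat. if i = k then 1 else 0 :: real"
  have "quad_form n M (\<lambda>i. v i + c * ?e i) = quad_form n M v
      + c * (\<Sum>i<n. ?e i * (\<Sum>j<n. M i j * v j)) + c * (\<Sum>i<n. \<Sum>j<n. ?e j * (v i * M i j))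
      + c\<^sup>2 * (\<Sum>i<n. ?e i * (\<Sum>j<n. ?e j * M i j))"
    unfolding quad_form_def
    by (simp add: algebra_simps power2_eq_square sum.distrib sum_distrib_left)
  also have "(\<Sum>i<n. ?e i * (\<Sum>j<n. M i j * v j)) = (\<Sum>j<n. v j * M k j)"
    using k by (subst sum_unit_mult) (auto simp: mult.commute)
  also have "(\<Sum>i<n. \<Sum>j<n. ?e j * (v i * M i j)) = (\<Sum>j<n. v j * M k j)"
    using k s by (simp add: sum_unit_mult sym_form_def)
  also have "(\<Sum>i<n. ?e i * (\<Sum>j<n. ?e j * M i j)) = M k k"
    using k by (simp add: sum_unit_mult)
  finally show ?thesis by simp
qed

lemma psd_form_diag_nonneg:
  assumes "sym_form n M" "psd_form n M" "k < n"
  shows "0 \<le> M k k"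
proof -
  have "0 \<le> quad_form n M (\<lambda>i. 0 + 1 * (if i = k then 1 else 0))"
    using assms(2) unfolding psd_form_def ..
  then show ?thesis
    unfolding quad_form_add_unit[OF assms(1,3)] by (simp add: quad_form_zero_vec)
qed

text \<open>Otherwise moving along the \<open>k\<close>-th unit vector makes the form negative.\<close>
lemma psd_form_zero_diag_row:
  assumes s: "sym_form n M" and p: "psd_form n M" and k: "k < n" and z: "M k k = 0"
    and j: "j < n"
  shows "M k j = 0"
proof -
  have b0: "(\<Sum>j<n. v j * M k j) = 0" for v
  proof (rule ccontr)
    let ?b = "\<Sum>j<n. v j * M k j"
    define c where "c = - (\<bar>quad_form n M v\<bar> + 1) / (2 * ?b)"
    assume "?b \<noteq> 0"
    then have "2 * c * ?b = - (\<bar>quad_form n M v\<bar> + 1)" by (simp add: c_def)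
    then have "quad_form n M (\<lambda>i. v i + c * (if i = k then 1 else 0)) < 0"
      unfolding quad_form_add_unit[OF s k] z by linarith
    then show False using p unfolding psd_form_def by (meson not_less)
  qed
  show ?thesis
    using b0[of "\<lambda>i. if i = j then 1 else 0"] sum_unit_mult[OF j, of "M k"] by (simp add: mult.commute)
qed

lemma psd_form_schur_complement:
  assumes s: "sym_form n M" and p: "psd_form n M" and k: "k < n" and a: "0 < M k k"
  shows "psd_form n (\<lambda>i j. M i j - M k i * M k j / M k k)"
  unfolding psd_form_def
proof
  fix v
  let ?b = "\<Sum>j<n. v j * M k j"
  have "quad_form n (\<lambda>i j. M i j - M k i * M k j / M k k) v
      = quad_form n M v - (\<Sum>i<n. v i * M k i) * (\<Sum>j<n. v j * M k j) / M k k"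
    unfolding quad_form_def
    by (simp add: algebra_simps sum_subtractf sum_product sum_divide_distrib)
  also have "\<dots> = quad_form n M (\<lambda>i. v i + (- ?b / M k k) * (if i = k then 1 else 0))"
    unfolding quad_form_add_unit[OF s k] using a by (simp add: field_simps power2_eq_square)
  also have "0 \<le> \<dots>" using p unfolding psd_form_def ..
  finally show "0 \<le> quad_form n (\<lambda>i j. M i j - M k i * M k j / M k k) v" .
qed

lemma zero_diag_shrinks_support:
  assumes s: "sym_form n M" and p: "psd_form n M"
    and supp: "\<forall>i<n. \<forall>j<n. Suc k \<le> i \<or> Suc k \<le> j \<longrightarrow> M i j = 0"
    and z: "k < n \<Longrightarrow> M k k = 0"
  shows "\<forall>i<n. \<forall>j<n. k \<le> i \<or> k \<le> j \<longrightarrow> M i j = 0"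
proof (intro allI impI)
  fix i j assume ij: "i < n" "j < n" "k \<le> i \<or> k \<le> j"
  consider "i = k" | "j = k" | "Suc k \<le> i \<or> Suc k \<le> j" using ij(3) by linarith
  then show "M i j = 0"
  proof cases
    case 1
    then have k: "k < n" using ij(1) by simp
    show ?thesis using psd_form_zero_diag_row[OF s p k z[OF k] ij(2)] 1 by simp
  next
    case 2
    then have k: "k < n" using ij(2) by simp
    show ?thesis
      using psd_form_zero_diag_row[OF s p k z[OF k] ij(1)] s ij(1) k 2 unfolding sym_form_def by simp
  next
    case 3
    then show ?thesis using supp ij(1,2) by blast
  qed
qed

lemma schur_complement_shrinks_support:
  assumes s: "sym_form n M" and supp: "\<forall>i<n. \<forall>j<n. Suc k \<le> i \<or> Suc k \<le> j \<longrightarrow> M i j = 0"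
    and k: "k < n" and a: "0 < M k k"
  shows "\<forall>i<n. \<forall>j<n. k \<le> i \<or> k \<le> j \<longrightarrow> M i j - M k i * M k j / M k k = 0"
proof (intro allI impI)
  fix i j assume ij: "i < n" "j < n" "k \<le> i \<or> k \<le> j"
  have sym: "M i j = M j i" if "i < n" "j < n" for i j
    using s that unfolding sym_form_def by blast
  consider "i = k" | "j = k" | "Suc k \<le> i" | "Suc k \<le> j" using ij(3) by linarith
  then show "M i j - M k i * M k j / M k k = 0"
  proof cases
    case 1
    then show ?thesis using a by simp
  next
    case 2
    then show ?thesis using a sym[OF ij(1) k] by simp
  next
    case 3
    then have "M i j = 0" "M k i = 0" using supp sym[OF ij(1) k] ij k by auto
    then show ?thesis by simp
  next
    case 4
    then have "M i j = 0" "M k j = 0" using supp sym[OF ij(2) k] ij k by auto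
    then show ?thesis by simp
  qed
qed

text \<open>Cholesky decomposition, by induction on the size \<open>k\<close> of the leading block outside of
  which \<open>M\<close> vanishes.\<close>
lemma psd_form_gram_supported:
  assumes "sym_form n M" "psd_form n M" "\<forall>i<n. \<forall>j<n. k \<le> i \<or> k \<le> j \<longrightarrow> M i j = 0"
  shows "\<exists>R. \<forall>i<n. \<forall>j<n. M i j = (\<Sum>a<k. R a i * R a j)"
  using assms
proof (induction k arbitrary: M)
  case 0
  then show ?case by auto
next
  case (Suc k M)
  note s = Suc.prems(1) and p = Suc.prems(2) and supp = Suc.prems(3)
  show ?case
  proof (cases "k < n \<and> M k k \<noteq> 0")
    case False
    then have "\<forall>i<n. \<forall>j<n. k \<le> i \<or> k \<le> j \<longrightarrow> M i j = 0"
      by (intro zero_diag_shrinks_support[OF s p supp]) auto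
    then obtain R where "\<forall>i<n. \<forall>j<n. M i j = (\<Sum>a<k. R a i * R a j)"
      using Suc.IH[OF s p] by blast
    then show ?thesis by (intro exI[of _ "R(k := (\<lambda>_. 0))"]) simp
  next
    case True
    then have k: "k < n" and a: "0 < M k k"
      using psd_form_diag_nonneg[OF s p] by (auto simp: less_le)
    have "sym_form n (\<lambda>i j. M i j - M k i * M k j / M k k)"
      using s by (auto simp: sym_form_def mult.commute)
    from Suc.IH[OF this psd_form_schur_complement[OF s p k a]
        schur_complement_shrinks_support[OF s supp k a]]
    obtain R where R: "\<forall>i<n. \<forall>j<n. M i j - M k i * M k j / M k k = (\<Sum>a<k. R a i * R a j)"
      by blast
    define r where "r j = M k j / sqrt (M k k)" for j
    have rr: "r i * r j = M k i * M k j / M k k" for i j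
      using a by (simp add: r_def real_sqrt_mult[symmetric])
    show ?thesis
    proof (intro exI[of _ "R(k := r)"] allI impI)
      fix i j assume "i < n" "j < n"
      then have "M i j - r i * r j = (\<Sum>a<k. R a i * R a j)" using R rr by simp
      then have "M i j = (\<Sum>a<k. R a i * R a j) + r i * r j" by (simp add: diff_eq_eq)
      then show "M i j = (\<Sum>a<Suc k. (R(k := r)) a i * (R(k := r)) a j)" by simp
    qed
  qed
qed

lemma psd_form_gram:
  "sym_form n M \<Longrightarrow> psd_form n M \<Longrightarrow> \<exists>R. \<forall>i<n. \<forall>j<n. M i j = (\<Sum>a<n. R a i * R a j)"
  using psd_form_gram_supported[of n M n] by auto

lemma quad_form_gram:
  assumes "\<forall>i<n. \<forall>j<n. M i j = (\<Sum>a<K. R a i * R a j)"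
  shows "quad_form n M v = (\<Sum>a<K. (\<Sum>i<n. R a i * v i)\<^sup>2)"
proof -
  have "quad_form n M v = (\<Sum>i<n. \<Sum>j<n. \<Sum>a<K. (R a i * v i) * (R a j * v j))"
    unfolding quad_form_def using assms
    by (intro sum.cong refl) (simp add: sum_distrib_left sum_distrib_right mult_ac)
  also have "\<dots> = (\<Sum>a<K. \<Sum>i<n. \<Sum>j<n. (R a i * v i) * (R a j * v j))"
    by (simp add: sum.swap[of _ "{..<K}"])
  finally show ?thesis by (simp add: power2_eq_square sum_product)
qed

lemma scalar_prod_mult_mat_vec:
  "A \<in> carrier_mat n n \<Longrightarrow> v \<in> carrier_vec n \<Longrightarrow> v \<bullet> (A *\<^sub>v v) = quad_form n (entries A) (($) v)"
  unfolding quad_form_def entries_def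
  by (auto simp: scalar_prod_def sum_distrib_left mult.assoc atLeast0LessThan intro!: sum.cong)

lemma transpose_eq_iff_sym_form:
  "A \<in> carrier_mat n n \<Longrightarrow> transpose_mat A = A \<longleftrightarrow> sym_form n (entries A)"
  unfolding sym_form_def entries_def by (auto simp: mat_eq_iff)

lemma psd_iff_psd_form:
  assumes A: "A \<in> carrier_mat n n"
  shows "psd A \<longleftrightarrow> sym_form n (entries A) \<and> psd_form n (entries A)"
proof -
  have "(\<forall>v\<in>carrier_vec n. 0 \<le> v \<bullet> (A *\<^sub>v v)) \<longleftrightarrow> psd_form n (entries A)"
  proof
    assume nonneg: "\<forall>v\<in>carrier_vec n. 0 \<le> v \<bullet> (A *\<^sub>v v)"
    show "psd_form n (entries A)" unfolding psd_form_def
    proof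
      fix f :: "nat \<Rightarrow> real"
      have "0 \<le> vec n f \<bullet> (A *\<^sub>v vec n f)" using nonneg by simp
      also have "\<dots> = quad_form n (entries A) f"
        unfolding scalar_prod_mult_mat_vec[OF A vec_carrier] by (rule quad_form_cong) auto
      finally show "0 \<le> quad_form n (entries A) f" .
    qed
  qed (simp add: psd_form_def scalar_prod_mult_mat_vec[OF A])
  then show ?thesis
    unfolding psd_def using A transpose_eq_iff_sym_form[OF A] by auto
qed

lemma pd_form_scalar_prod_pos:
  assumes A: "A \<in> carrier_mat n n" and "pd_form n (entries A)"
    and v: "v \<in> carrier_vec n" "v \<noteq> 0\<^sub>v n"
  shows "0 < v \<bullet> (A *\<^sub>v v)"
proof -
  obtain i where "i < n" "v $ i \<noteq> 0" using v by (auto simp: vec_eq_iff)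
  then show ?thesis
    using assms scalar_prod_mult_mat_vec[OF A v(1)] unfolding pd_form_def by auto
qed

lemma sum_lessThan_add_split: "(\<Sum>r<a + b. f r) = (\<Sum>r<a. f r) + (\<Sum>r<b. f (a + r :: nat))"
  by (induction b) (auto simp: add.assoc)

lemma quad_form_split:
  assumes "\<And>i j. i < a \<Longrightarrow> j < b \<Longrightarrow> M i (a + j) = 0"
    and "\<And>i j. i < b \<Longrightarrow> j < a \<Longrightarrow> M (a + i) j = 0"
  shows "quad_form (a + b) M v
    = quad_form a M v + quad_form b (\<lambda>i j. M (a + i) (a + j)) (\<lambda>i. v (a + i))"
proof -
  have "(\<Sum>i<a. \<Sum>j<b. v i * M i (a + j) * v (a + j)) = 0"
    "(\<Sum>i<b. \<Sum>j<a. v (a + i) * M (a + i) j * v j) = 0"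
    by (auto intro!: sum.neutral simp: assms)
  then show ?thesis unfolding quad_form_def sum_lessThan_add_split by (simp add: sum.distrib)
qed

lemma carrier_diag_block_mat:
  "(\<And>i. i \<in> set l \<Longrightarrow> B i \<in> carrier_mat (n i) (n i))
    \<Longrightarrow> diag_block_mat (map B l) \<in> carrier_mat (sum_list (map n l)) (sum_list (map n l))"
  unfolding carrier_mat_def by (induction l) (auto simp: Let_def)

lemma diag_block_mat_Cons_entry:
  assumes "A \<in> carrier_mat a a" "diag_block_mat As \<in> carrier_mat b b" "r < a + b" "c < a + b"
  shows "diag_block_mat (A # As) $$ (r, c) =
    (if r < a \<and> c < a then A $$ (r, c)
     else if a \<le> r \<and> a \<le> c then diag_block_mat As $$ (r - a, c - a) else 0)"
  using assms by (auto simp: Let_def)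

lemma quad_form_diag_block_mat_Cons:
  assumes A: "A \<in> carrier_mat a a" and D: "diag_block_mat As \<in> carrier_mat b b"
  shows "quad_form (a + b) (entries (diag_block_mat (A # As))) v
    = quad_form a (entries A) v + quad_form b (entries (diag_block_mat As)) (\<lambda>i. v (a + i))"
proof -
  note entry = diag_block_mat_Cons_entry[OF A D]
  have "quad_form (a + b) (entries (diag_block_mat (A # As))) v
      = quad_form a (entries (diag_block_mat (A # As))) v
        + quad_form b (\<lambda>i j. entries (diag_block_mat (A # As)) (a + i) (a + j)) (\<lambda>i. v (a + i))"
    by (rule quad_form_split) (simp_all add: entries_def entry del: diag_block_mat.simps)
  also have "\<dots> = quad_form a (entries A) v + quad_form b (entries (diag_block_mat As)) (\<lambda>i. v (a + i))"
    by (intro arg_cong2[where f="(+)"] quad_form_cong)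
       (simp_all add: entries_def entry del: diag_block_mat.simps)
  finally show ?thesis .
qed

lemma psd_form_diag_block_mat_iff:
  assumes "\<And>i. i \<in> set l \<Longrightarrow> B i \<in> carrier_mat (n i) (n i)"
  shows "psd_form (sum_list (map n l)) (entries (diag_block_mat (map B l)))
    \<longleftrightarrow> (\<forall>i\<in>set l. psd_form (n i) (entries (B i)))"
  using assms
proof (induction l)
  case Nil
  then show ?case by (simp add: psd_form_def quad_form_def)
next
  case (Cons a l)
  let ?b = "sum_list (map n l)" and ?D = "diag_block_mat (map B l)"
  let ?Q = "quad_form (n a + ?b) (entries (diag_block_mat (B a # map B l)))"
  have Q: "?Q v = quad_form (n a) (entries (B a)) v + quad_form ?b (entries ?D) (\<lambda>i. v (n a + i))" for v
    using quad_form_diag_block_mat_Cons[of "B a" "n a" "map B l" ?b] Cons.prems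
    by (simp add: carrier_diag_block_mat del: diag_block_mat.simps)
  have IH: "psd_form ?b (entries ?D) \<longleftrightarrow> (\<forall>i\<in>set l. psd_form (n i) (entries (B i)))"
    by (rule Cons.IH) (simp add: Cons.prems)
  have "psd_form (n a + ?b) (entries (diag_block_mat (B a # map B l)))
      \<longleftrightarrow> psd_form (n a) (entries (B a)) \<and> psd_form ?b (entries ?D)"
  proof
    assume psd: "psd_form (n a + ?b) (entries (diag_block_mat (B a # map B l)))"
    show "psd_form (n a) (entries (B a)) \<and> psd_form ?b (entries ?D)"
      unfolding psd_form_def
    proof (intro conjI allI)
      fix v
      have "0 \<le> ?Q (\<lambda>r. if r < n a then v r else 0)" using psd unfolding psd_form_def ..
      also have "?Q (\<lambda>r. if r < n a then v r else 0) = quad_form (n a) (entries (B a)) v"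
        unfolding Q by (simp add: quad_form_zero_vec cong: quad_form_cong)
      finally show "0 \<le> quad_form (n a) (entries (B a)) v" .
      have "0 \<le> ?Q (\<lambda>r. if r < n a then 0 else v (r - n a))" using psd unfolding psd_form_def ..
      also have "?Q (\<lambda>r. if r < n a then 0 else v (r - n a)) = quad_form ?b (entries ?D) v"
        unfolding Q by (simp add: quad_form_zero_vec)
      finally show "0 \<le> quad_form ?b (entries ?D) v" .
    qed
  next
    assume "psd_form (n a) (entries (B a)) \<and> psd_form ?b (entries ?D)"
    then show "psd_form (n a + ?b) (entries (diag_block_mat (B a # map B l)))"
      unfolding psd_form_def Q by (intro allI add_nonneg_nonneg) blast+
  qed
  then show ?case unfolding list.map(2) sum_list.Cons list.set(2) ball_simps IH .
qed

lemma pd_form_diag_block_mat: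
  assumes "\<And>i. i \<in> set l \<Longrightarrow> B i \<in> carrier_mat (n i) (n i)"
    and "\<And>i. i \<in> set l \<Longrightarrow> pd_form (n i) (entries (B i))"
  shows "pd_form (sum_list (map n l)) (entries (diag_block_mat (map B l)))"
  using assms
proof (induction l)
  case Nil
  then show ?case by (simp add: pd_form_def)
next
  case (Cons a l)
  let ?b = "sum_list (map n l)" and ?D = "diag_block_mat (map B l)"
  have pa: "pd_form (n a) (entries (B a))" using Cons.prems by simp
  have pD: "pd_form ?b (entries ?D)" using Cons.prems by (intro Cons.IH) auto
  have Q: "quad_form (n a + ?b) (entries (diag_block_mat (B a # map B l))) v
      = quad_form (n a) (entries (B a)) v + quad_form ?b (entries ?D) (\<lambda>i. v (n a + i))" for v
    using quad_form_diag_block_mat_Cons[of "B a" "n a" "map B l" ?b] Cons.prems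
    by (simp add: carrier_diag_block_mat del: diag_block_mat.simps)
  show ?case unfolding pd_form_def
  proof (intro allI impI)
    fix v :: "nat \<Rightarrow> real"
    assume "\<exists>j<sum_list (map n (a # l)). v j \<noteq> 0"
    then obtain j where j: "j < n a + ?b" "v j \<noteq> 0" by auto
    have "0 \<le> quad_form (n a) (entries (B a)) v" "0 \<le> quad_form ?b (entries ?D) (\<lambda>i. v (n a + i))"
      using pd_form_imp_psd_form[OF pa] pd_form_imp_psd_form[OF pD] unfolding psd_form_def by blast+
    moreover have "0 < quad_form (n a) (entries (B a)) v \<or> 0 < quad_form ?b (entries ?D) (\<lambda>i. v (n a + i))"
    proof (cases "j < n a")
      case True
      then show ?thesis using pa j unfolding pd_form_def by blast
    next
      case False
      then have "\<exists>j'<?b. v (n a + j') \<noteq> 0"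
        using j by (intro exI[of _ "j - n a"]) auto
      then show ?thesis using pD[unfolded pd_form_def, rule_format, of "\<lambda>i. v (n a + i)"] by simp
    qed
    ultimately show "0 < quad_form (sum_list (map n (a # l))) (entries (diag_block_mat (map B (a # l)))) v"
      using Q by (simp del: diag_block_mat.simps, linarith)
  qed
qed

lemma sym_form_diag_block_mat:
  assumes "\<And>i. i \<in> set l \<Longrightarrow> B i \<in> carrier_mat (n i) (n i)"
    and "\<And>i. i \<in> set l \<Longrightarrow> sym_form (n i) (entries (B i))"
  shows "sym_form (sum_list (map n l)) (entries (diag_block_mat (map B l)))"
  using assms
proof (induction l)
  case Nil
  then show ?case by (simp add: sym_form_def)
next
  case (Cons a l)
  have A: "B a \<in> carrier_mat (n a) (n a)"
    and D: "diag_block_mat (map B l) \<in> carrier_mat (sum_list (map n l)) (sum_list (map n l))"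
    using Cons.prems by (auto intro: carrier_diag_block_mat)
  have "sym_form (n a) (entries (B a))" using Cons.prems by simp
  moreover have "sym_form (sum_list (map n l)) (entries (diag_block_mat (map B l)))"
    using Cons.prems by (intro Cons.IH) auto
  ultimately show ?case
    using diag_block_mat_Cons_entry[OF A D]
    by (auto simp: sym_form_def entries_def simp del: diag_block_mat.simps)
qed

lemma diag_block_mat_lincomb_entry:
  fixes B :: "nat \<Rightarrow> real mat"
  assumes "\<And>i. i \<in> set l \<Longrightarrow> B i \<in> carrier_mat (n i) (n i)"
    and "\<And>i u. i \<in> set l \<Longrightarrow> E i u \<in> carrier_mat (n i) (n i)"
    and "\<And>i j k. i \<in> set l \<Longrightarrow> j < n i \<Longrightarrow> k < n i \<Longrightarrow> B i $$ (j, k) = (\<Sum>u\<in>U. x u * E i u $$ (j, k))"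
    and "r < sum_list (map n l)" "c < sum_list (map n l)"
  shows "diag_block_mat (map B l) $$ (r, c) = (\<Sum>u\<in>U. x u * diag_block_mat (map (\<lambda>i. E i u) l) $$ (r, c))"
  using assms
proof (induction l arbitrary: r c)
  case Nil
  then show ?case by simp
next
  case (Cons a l)
  let ?b = "sum_list (map n l)"
  have A: "B a \<in> carrier_mat (n a) (n a)" "E a u \<in> carrier_mat (n a) (n a)" for u
    using Cons.prems by auto
  have D: "diag_block_mat (map B l) \<in> carrier_mat ?b ?b"
    "diag_block_mat (map (\<lambda>i. E i u) l) \<in> carrier_mat ?b ?b" for u
    using Cons.prems by (auto intro!: carrier_diag_block_mat)
  have rc: "r < n a + ?b" "c < n a + ?b" using Cons.prems by auto
  have IH: "diag_block_mat (map B l) $$ (r - n a, c - n a)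
      = (\<Sum>u\<in>U. x u * diag_block_mat (map (\<lambda>i. E i u) l) $$ (r - n a, c - n a))"
    if "n a \<le> r" "n a \<le> c"
    using that rc by (intro Cons.IH) (simp_all add: Cons.prems(1-3))
  show ?case
    unfolding list.map(2) diag_block_mat_Cons_entry[OF A(1) D(1) rc] diag_block_mat_Cons_entry[OF A(2) D(2) rc]
    using IH Cons.prems(3)[of a r c] by (cases "r < n a"; cases "c < n a") auto
qed

lemma minv_pd_form:
  assumes L: "L \<in> carrier_mat n n" and p: "pd_form n (entries L)"
  shows "minv L \<in> carrier_mat n n" "L * minv L = 1\<^sub>m n" "minv L * L = 1\<^sub>m n"
proof -
  have "det L \<noteq> 0"
  proof
    assume "det L = 0"
    then obtain v where v: "v \<in> carrier_vec n" "v \<noteq> 0\<^sub>v n" "L *\<^sub>v v = 0\<^sub>v n"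
      using det_0_iff_vec_prod_zero[OF L] by auto
    have "0 < v \<bullet> (L *\<^sub>v v)" by (rule pd_form_scalar_prod_pos[OF L p v(1,2)])
    then show False using v by simp
  qed
  from det_non_zero_imp_unit[OF L this, of "()"]
  obtain B where B: "B \<in> carrier_mat n n" "B * L = 1\<^sub>m n" "L * B = 1\<^sub>m n"
    unfolding Units_def ring_mat_def by auto
  have "\<exists>B. inverts_mat L B \<and> inverts_mat B L"
    using B L by (auto simp: inverts_mat_def intro!: exI[of _ B])
  then have inv: "inverts_mat L (minv L) \<and> inverts_mat (minv L) L"
    unfolding minv_def by (rule someI_ex)
  have "dim_col (minv L) = n"
    using inv L unfolding inverts_mat_def by (metis index_mult_mat(3) index_one_mat(3) carrier_matD(1))
  moreover have "dim_row (minv L) = n"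
    using inv L unfolding inverts_mat_def
    by (metis index_mult_mat(3) index_one_mat(2) index_one_mat(3) carrier_matD(2))
  ultimately show C: "minv L \<in> carrier_mat n n" by auto
  show "L * minv L = 1\<^sub>m n" "minv L * L = 1\<^sub>m n"
    using inv L C unfolding inverts_mat_def by auto
qed

lemma inverse_of_symmetric_symmetric:
  fixes L M :: "real mat"
  assumes L: "L \<in> carrier_mat n n" and M: "M \<in> carrier_mat n n"
    and right_inv: "L * M = 1\<^sub>m n" and left_inv: "M * L = 1\<^sub>m n" and tL: "transpose_mat L = L"
  shows "transpose_mat M = M"
proof -
  have tM_left_inv: "transpose_mat M * L = 1\<^sub>m n"
    using arg_cong[OF right_inv, of transpose_mat] transpose_mult[OF L M] tL by simp
  have "transpose_mat M = transpose_mat M * (L * M)" using right_inv M by simp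
  also have "\<dots> = (transpose_mat M * L) * M" using L M by (simp add: assoc_mult_mat[of _ n n L n M n])
  also have "\<dots> = M" using tM_left_inv M by simp
  finally show ?thesis .
qed

text \<open>\<open>v\<^sup>T M v = (M v)\<^sup>T L (M v)\<close>, and \<open>M v \<noteq> 0\<close> for \<open>v \<noteq> 0\<close>.\<close>
lemma pd_form_inverse:
  assumes L: "L \<in> carrier_mat n n" and p: "pd_form n (entries L)" and M: "M \<in> carrier_mat n n"
    and right_inv: "L * M = 1\<^sub>m n" and tL: "transpose_mat L = L"
  shows "pd_form n (entries M)"
  unfolding pd_form_def
proof (intro allI impI)
  fix f :: "nat \<Rightarrow> real"
  assume "\<exists>j<n. f j \<noteq> 0"
  then have v: "vec n f \<in> carrier_vec n" "vec n f \<noteq> 0\<^sub>v n" by (auto simp: vec_eq_iff)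
  let ?y = "M *\<^sub>v vec n f"
  have y: "?y \<in> carrier_vec n" using M by simp
  have Ly: "L *\<^sub>v ?y = vec n f" using right_inv L M by (simp flip: assoc_mult_mat_vec)
  have "?y \<noteq> 0\<^sub>v n"
  proof
    assume "?y = 0\<^sub>v n"
    moreover have "L *\<^sub>v 0\<^sub>v n = 0\<^sub>v n" using L by (intro eq_vecI) (auto simp: scalar_prod_def)
    ultimately have "vec n f = 0\<^sub>v n" using Ly by simp
    then show False using v(2) by simp
  qed
  then have "0 < ?y \<bullet> (L *\<^sub>v ?y)" by (rule pd_form_scalar_prod_pos[OF L p y])
  also have "?y \<bullet> (L *\<^sub>v ?y) = vec n f \<bullet> (M *\<^sub>v vec n f)"
    using Ly comm_scalar_prod[OF y v(1)] by simp
  also have "\<dots> = quad_form n (entries M) f"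
    using scalar_prod_mult_mat_vec[OF M v(1)] by (simp cong: quad_form_cong)
  finally show "0 < quad_form n (entries M) f" .
qed

lemma psd_sandwich:
  assumes A: "A \<in> carrier_mat n n" and M: "M \<in> carrier_mat n n"
    and "psd A" and tM: "transpose_mat M = M"
  shows "psd (M * A * M)"
proof -
  have tA: "transpose_mat A = A" and nonneg: "\<And>v. v \<in> carrier_vec n \<Longrightarrow> 0 \<le> v \<bullet> (A *\<^sub>v v)"
    using \<open>psd A\<close> A unfolding psd_def by auto
  have C: "M * A * M \<in> carrier_mat n n" using A M by simp
  have "transpose_mat (M * A * M) = transpose_mat M * transpose_mat (M * A)"
    using A M by (intro transpose_mult) auto
  also have "\<dots> = M * (A * M)" using transpose_mult[OF M A] tA tM by simp
  also have "\<dots> = M * A * M" using A M by simp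
  finally have "transpose_mat (M * A * M) = M * A * M" .
  moreover have "0 \<le> v \<bullet> ((M * A * M) *\<^sub>v v)" if v: "v \<in> carrier_vec n" for v
  proof -
    have "(M * A * M) *\<^sub>v v = (M * A) *\<^sub>v (M *\<^sub>v v)"
      using A M v by (intro assoc_mult_mat_vec) auto
    also have "\<dots> = M *\<^sub>v (A *\<^sub>v (M *\<^sub>v v))"
      using A M v by (intro assoc_mult_mat_vec) auto
    finally have "v \<bullet> ((M * A * M) *\<^sub>v v) = v \<bullet> (M *\<^sub>v (A *\<^sub>v (M *\<^sub>v v)))" by simp
    also have "\<dots> = (M *\<^sub>v v) \<bullet> (A *\<^sub>v (M *\<^sub>v v))"
      using transpose_vec_mult_scalar[OF M, of "A *\<^sub>v (M *\<^sub>v v)" v] A M v tM by simp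
    finally show ?thesis using nonneg M v by simp
  qed
  ultimately show ?thesis unfolding psd_def using C M by auto
qed

lemma psd_congruence_iff:
  assumes L: "L \<in> carrier_mat n n" and M: "M \<in> carrier_mat n n" and A: "A \<in> carrier_mat n n"
    and right_inv: "L * M = 1\<^sub>m n" and left_inv: "M * L = 1\<^sub>m n"
    and tL: "transpose_mat L = L" and tM: "transpose_mat M = M"
  shows "psd (M * A * M) \<longleftrightarrow> psd A"
proof
  assume "psd (M * A * M)"
  moreover have "L * (M * A * M) * L = A"
    using L M A right_inv left_inv by (simp add: assoc_mult_mat[of L n n M n "A * M" n, symmetric]
      assoc_mult_mat[of A n n M n L n])
  ultimately show "psd A"
    using psd_sandwich[of "M * A * M" n L] L M A tL by simp
qed (use psd_sandwich[OF A M _ tM] in blast)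

section \<open>Cones in \<open>\<real>\<^sup>U\<close>\<close>

lemma interior_step_mem:
  fixes S :: "('u::finite \<Rightarrow> real) set"
  assumes "x \<in> interior S"
  obtains e where "0 < e" "(\<lambda>u. x u + e * y u) \<in> S"
proof -
  let ?f = "\<lambda>t::real. (\<lambda>u. x u + t * y u)"
  have "continuous_on UNIV ?f"
    by (rule continuous_on_coordinatewise_then_product) (intro continuous_intros)
  then have "open (?f -` interior S)" by (rule open_vimage[OF open_interior])
  moreover have "0 \<in> ?f -` interior S" using assms by simp
  ultimately obtain e where e: "0 < e" "ball 0 e \<subseteq> ?f -` interior S" using openE by blast
  moreover have "e / 2 \<in> ball 0 e" using e by (simp add: dist_real_def)
  ultimately have "?f (e / 2) \<in> S" using interior_subset by blast
  then show ?thesis using that[of "e / 2"] e(1) by simp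
qed

lemma sum_squares_eq_0_iff: "(\<Sum>u\<in>UNIV. s u * s u) = (0::real) \<longleftrightarrow> s = (\<lambda>u. 0)"
  for s :: "'u::finite \<Rightarrow> real"
  by (simp add: sum_nonneg_eq_0_iff fun_eq_iff)

text \<open>Moving from a point of \<open>C\<close> in direction \<open>-w\<close> changes \<open>w \<bullet> s\<close> by a multiple of
  \<open>|w|\<^sup>2\<close>.\<close>
lemma orthogonal_to_solid_set_eq_0:
  fixes C :: "('u::finite \<Rightarrow> real) set"
  assumes "interior C \<noteq> {}" and orth: "\<And>s. s \<in> C \<Longrightarrow> (\<Sum>u\<in>UNIV. w u * s u) = 0"
  shows "w = (\<lambda>u. 0)"
proof -
  obtain s where s: "s \<in> interior C" using assms(1) by blast
  then obtain e where e: "0 < e" "(\<lambda>u. s u + e * - w u) \<in> C" by (rule interior_step_mem)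
  have "0 = (\<Sum>u\<in>UNIV. w u * (s u + e * - w u))" using orth[OF e(2)] by simp
  also have "\<dots> = (\<Sum>u\<in>UNIV. w u * s u) - e * (\<Sum>u\<in>UNIV. w u * w u)"
    by (simp add: algebra_simps sum.distrib sum_distrib_left sum_subtractf)
  also have "(\<Sum>u\<in>UNIV. w u * s u) = 0" using orth s interior_subset by blast
  finally show ?thesis using e(1) sum_squares_eq_0_iff[of w] by simp
qed

lemma interior_dual_cone_pos:
  fixes C :: "('u::finite \<Rightarrow> real) set"
  assumes x: "x \<in> interior {x. \<forall>s\<in>C. 0 \<le> (\<Sum>u\<in>UNIV. x u * s u)}"
    and s: "s \<in> C" "s \<noteq> (\<lambda>u. 0)"
  shows "0 < (\<Sum>u\<in>UNIV. x u * s u)"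
proof (rule ccontr)
  assume "\<not> 0 < (\<Sum>u\<in>UNIV. x u * s u)"
  moreover have "0 \<le> (\<Sum>u\<in>UNIV. x u * s u)" using x s interior_subset by blast
  ultimately have xs: "(\<Sum>u\<in>UNIV. x u * s u) = 0" by simp
  obtain e where e: "0 < e" "(\<lambda>u. x u + e * - s u) \<in> {x. \<forall>s\<in>C. 0 \<le> (\<Sum>u\<in>UNIV. x u * s u)}"
    using x by (rule interior_step_mem)
  then have "0 \<le> (\<Sum>u\<in>UNIV. (x u + e * - s u) * s u)" using s by blast
  also have "\<dots> = (\<Sum>u\<in>UNIV. x u * s u) - e * (\<Sum>u\<in>UNIV. s u * s u)"
    by (simp add: algebra_simps sum.distrib sum_distrib_left sum_subtractf)
  finally have "(\<Sum>u\<in>UNIV. s u * s u) \<le> 0" using xs e(1) by (simp add: mult_le_0_iff)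
  then have "(\<Sum>u\<in>UNIV. s u * s u) = 0" by (simp add: antisym sum_nonneg)
  then show False using s(2) sum_squares_eq_0_iff by blast
qed

section \<open>The map \<open>\<Lambda>\<close>\<close>

abbreviation Lam_dim :: "(nat \<Rightarrow> 'a list) \<Rightarrow> nat \<Rightarrow> nat" where
  "Lam_dim p m \<equiv> sum_list (map (\<lambda>i. length (p i)) [0..<m])"

lemma Lam_i_carrier: "Lam_i g p q i x \<in> carrier_mat (length (p i)) (length (p i))"
  unfolding Lam_i_def by simp

lemma Lam_i_entry:
  "j < length (p i) \<Longrightarrow> k < length (p i) \<Longrightarrow>
    Lam_i g p q i x $$ (j, k) = dual_value q x (\<lambda>z. g i z * (p i ! j) z * (p i ! k) z)"
  unfolding Lam_i_def dual_value_def by simp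

lemma sym_form_Lam_i: "sym_form (length (p i)) (entries (Lam_i g p q i x))"
  unfolding sym_form_def entries_def by (simp add: Lam_i_entry mult_ac)

lemma basis_elems_deg:
  "\<forall>i<m. is_basis_list (p i) (poly_deg_le (d i)) \<Longrightarrow> i < m \<Longrightarrow> j < length (p i)
    \<Longrightarrow> poly_deg_le (d i) (p i ! j)"
  unfolding is_basis_list_def by auto

lemma quad_form_Lam_i:
  assumes q: "is_basis_fun q (Vspace g d m)" and p: "\<forall>i<m. is_basis_list (p i) (poly_deg_le (d i))"
    and i: "i < m"
  shows "quad_form (length (p i)) (entries (Lam_i g p q i x)) v
    = dual_value q x (\<lambda>z. g i z * (\<Sum>j<length (p i). v j * (p i ! j) z)\<^sup>2)"
proof -
  let ?n = "length (p i)"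
  let ?I = "{..<?n} \<times> {..<?n}"
  define G where "G = (\<lambda>jk z. g i z * (p i ! fst jk) z * (p i ! snd jk) z)"
  have GV: "G jk \<in> Vspace g d m" if "jk \<in> ?I" for jk
  proof -
    have "poly_deg_le (2 * d i) (\<lambda>z. (p i ! fst jk) z * (p i ! snd jk) z)"
      unfolding mult_2 using that by (auto intro!: poly_deg_le_mult basis_elems_deg[OF p i])
    moreover have "G jk = (\<lambda>z. g i z * ((p i ! fst jk) z * (p i ! snd jk) z))"
      by (simp add: G_def mult.assoc)
    ultimately show ?thesis using weighted_poly_in_Vspace[where g=g and d=d, OF i] by simp
  qed
  have "(\<lambda>z. g i z * (\<Sum>j<?n. v j * (p i ! j) z)\<^sup>2)
      = (\<lambda>z. \<Sum>jk\<in>?I. (v (fst jk) * v (snd jk)) * G jk z)"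
    by (simp add: G_def power2_eq_square sum_product sum.cartesian_product
        sum_distrib_left mult_ac split_def)
  then have "dual_value q x (\<lambda>z. g i z * (\<Sum>j<?n. v j * (p i ! j) z)\<^sup>2)
      = (\<Sum>jk\<in>?I. (v (fst jk) * v (snd jk)) * dual_value q x (G jk))"
    using dual_value_sum[where A="?I" and f=G, OF q _ GV] by simp
  also have "\<dots> = quad_form ?n (entries (Lam_i g p q i x)) v"
    unfolding quad_form_def sum.cartesian_product
    by (intro sum.cong refl) (auto simp: entries_def Lam_i_entry G_def)
  finally show ?thesis ..
qed

lemma dual_value_weighted_square_nonneg:
  assumes q: "is_basis_fun q (Vspace g d m)" and p: "\<forall>i<m. is_basis_list (p i) (poly_deg_le (d i))"
    and i: "i < m" and psd: "psd_form (length (p i)) (entries (Lam_i g p q i w))"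
    and h: "poly_deg_le (d i) h"
  shows "0 \<le> dual_value q w (\<lambda>z. g i z * (h z)\<^sup>2)"
proof -
  obtain c where c: "h = (\<lambda>z. \<Sum>j<length (p i). c j * (p i ! j) z)"
    using p i h unfolding is_basis_list_def by blast
  have "0 \<le> quad_form (length (p i)) (entries (Lam_i g p q i w)) c"
    using psd unfolding psd_form_def ..
  then show ?thesis unfolding quad_form_Lam_i[OF q p i] c .
qed

lemma dual_value_weighted_sos_nonneg:
  assumes q: "is_basis_fun q (Vspace g d m)" and p: "\<forall>i<m. is_basis_list (p i) (poly_deg_le (d i))"
    and i: "i < m" and psd: "psd_form (length (p i)) (entries (Lam_i g p q i w))"
    and \<sigma>: "sos_deg_le (d i) \<sigma>"
  shows "0 \<le> dual_value q w (\<lambda>z. g i z * \<sigma> z)"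
proof -
  obtain hs where hs: "\<forall>h\<in>set hs. poly_deg_le (d i) h" "\<sigma> = (\<lambda>z. \<Sum>h\<leftarrow>hs. (h z)\<^sup>2)"
    using \<sigma> unfolding sos_deg_le_def by blast
  have deg: "poly_deg_le (d i) (hs ! k)" if "k < length hs" for k
    using hs(1) that by simp
  have "(\<lambda>z. g i z * \<sigma> z) = (\<lambda>z. \<Sum>k<length hs. 1 * (g i z * ((hs ! k) z)\<^sup>2))"
    by (simp add: hs(2) sum_list_sum_nth atLeast0LessThan sum_distrib_left)
  moreover have "(\<lambda>z. g i z * ((hs ! k) z)\<^sup>2) \<in> Vspace g d m" if "k < length hs" for k
    using weighted_poly_in_Vspace[where g=g and d=d, OF i poly_deg_le_square[OF deg[OF that]]] .
  ultimately have "dual_value q w (\<lambda>z. g i z * \<sigma> z)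
      = (\<Sum>k<length hs. 1 * dual_value q w (\<lambda>z. g i z * ((hs ! k) z)\<^sup>2))"
    using dual_value_sum[OF q, where A="{..<length hs}" and f="\<lambda>k z. g i z * ((hs ! k) z)\<^sup>2"
        and c="\<lambda>_. 1"] by simp
  also have "0 \<le> \<dots>"
    using dual_value_weighted_square_nonneg[OF q p i psd deg] by (intro sum_nonneg) simp
  finally show ?thesis .
qed

lemma Lam_carrier: "Lam g p q m x \<in> carrier_mat (Lam_dim p m) (Lam_dim p m)"
  unfolding Lam_def by (rule carrier_diag_block_mat) (rule Lam_i_carrier)

lemma sym_form_Lam: "sym_form (Lam_dim p m) (entries (Lam g p q m x))"
  unfolding Lam_def by (rule sym_form_diag_block_mat) (rule Lam_i_carrier, rule sym_form_Lam_i)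

lemma transpose_Lam: "transpose_mat (Lam g p q m x) = Lam g p q m x"
  using transpose_eq_iff_sym_form[OF Lam_carrier] sym_form_Lam by blast

lemma Lam_entry_lincomb:
  "r < Lam_dim p m \<Longrightarrow> c < Lam_dim p m \<Longrightarrow>
    Lam g p q m x $$ (r, c) = (\<Sum>u\<in>UNIV. x u * Lam g p q m (unit_coord u) $$ (r, c))"
  unfolding Lam_def
  by (rule diag_block_mat_lincomb_entry[where n="\<lambda>i. length (p i)"])
     (auto simp: Lam_i_carrier Lam_i_def unit_coord_def if_distrib[of "\<lambda>c. c * _"] cong: if_cong)

lemma psd_Lam_iff:
  "psd (Lam g p q m w) \<longleftrightarrow> (\<forall>i<m. psd_form (length (p i)) (entries (Lam_i g p q i w)))"
proof -
  have "psd (Lam g p q m w) \<longleftrightarrow> psd_form (Lam_dim p m) (entries (Lam g p q m w))"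
    using psd_iff_psd_form[OF Lam_carrier] sym_form_Lam by blast
  also have "\<dots> \<longleftrightarrow> (\<forall>i\<in>set [0..<m]. psd_form (length (p i)) (entries (Lam_i g p q i w)))"
    unfolding Lam_def by (rule psd_form_diag_block_mat_iff) (rule Lam_i_carrier)
  finally show ?thesis by auto
qed

lemma Sdual_iff_psd_Lam:
  assumes q: "is_basis_fun q (Vspace g d m)" and p: "\<forall>i<m. is_basis_list (p i) (poly_deg_le (d i))"
  shows "w \<in> Sdual g d m q \<longleftrightarrow> psd (Lam g p q m w)"
  unfolding psd_Lam_iff
proof (intro iffI allI impI)
  fix i assume w: "w \<in> Sdual g d m q" and i: "i < m"
  show "psd_form (length (p i)) (entries (Lam_i g p q i w))"
    unfolding psd_form_def
  proof
    fix v
    let ?h = "\<lambda>z. \<Sum>j<length (p i). v j * (p i ! j) z"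
    have "poly_deg_le (d i) ?h"
      by (intro poly_deg_le_sum poly_deg_le_cmult basis_elems_deg[OF p i]) simp
    then have "coords q (\<lambda>z. g i z * (?h z)\<^sup>2) \<in> Scone g d m q"
      by (rule weighted_square_in_Scone[OF q i])
    with w have "0 \<le> (\<Sum>u\<in>UNIV. w u * coords q (\<lambda>z. g i z * (?h z)\<^sup>2) u)"
      unfolding Sdual_def mem_Collect_eq by (rule bspec)
    then show "0 \<le> quad_form (length (p i)) (entries (Lam_i g p q i w)) v"
      unfolding quad_form_Lam_i[OF q p i] dual_value_def .
  qed
next
  assume psd: "\<forall>i<m. psd_form (length (p i)) (entries (Lam_i g p q i w))"
  show "w \<in> Sdual g d m q"
    unfolding Sdual_def
  proof (intro CollectI ballI)
    fix s assume "s \<in> Scone g d m q"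
    then obtain \<sigma> where \<sigma>: "\<forall>i<m. sos_deg_le (d i) (\<sigma> i)"
      and s: "poly_of q s = (\<lambda>z. \<Sum>i<m. 1 * (g i z * \<sigma> i z))"
      unfolding Scone_def WSOS_def by auto
    have V: "(\<lambda>z. g i z * \<sigma> i z) \<in> Vspace g d m" if "i < m" for i
      using weighted_poly_in_Vspace[where g=g and d=d, OF that sos_deg_le_imp_poly_deg_le] \<sigma> that by blast
    have "(\<Sum>u\<in>UNIV. w u * s u) = dual_value q w (poly_of q s)"
      unfolding dual_value_def coords_poly_of[OF q] ..
    also have "\<dots> = (\<Sum>i<m. 1 * dual_value q w (\<lambda>z. g i z * \<sigma> i z))"
      unfolding s using V by (intro dual_value_sum[OF q]) auto
    also have "0 \<le> \<dots>"
      using dual_value_weighted_sos_nonneg[OF q p] psd \<sigma> by (auto intro!: sum_nonneg)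
    finally show "0 \<le> (\<Sum>u\<in>UNIV. w u * s u)" .
  qed
qed

lemma Lam_eq_0_imp_eq_0:
  assumes q: "is_basis_fun q (Vspace g d m)" and p: "\<forall>i<m. is_basis_list (p i) (poly_deg_le (d i))"
    and proper: "proper_cone (Scone g d m q)"
    and z: "\<And>r c. r < Lam_dim p m \<Longrightarrow> c < Lam_dim p m \<Longrightarrow> Lam g p q m w $$ (r, c) = 0"
  shows "w = (\<lambda>u. 0)"
proof (rule orthogonal_to_solid_set_eq_0)
  show "interior (Scone g d m q) \<noteq> {}" using proper unfolding proper_cone_def by blast
  have "psd (Lam g p q m (\<lambda>u. t * w u))" for t
  proof -
    have "entries (Lam g p q m (\<lambda>u. t * w u)) r c = 0" if "r < Lam_dim p m" "c < Lam_dim p m" for r c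
      using Lam_entry_lincomb[OF that, of g q "\<lambda>u. t * w u"] Lam_entry_lincomb[OF that, of g q w]
        z[OF that] by (simp add: entries_def mult.assoc flip: sum_distrib_left)
    then show ?thesis
      unfolding psd_iff_psd_form[OF Lam_carrier] psd_form_def
      using sym_form_Lam by (simp add: quad_form_def)
  qed
  then have "(\<lambda>u. t * w u) \<in> Sdual g d m q" for t
    using Sdual_iff_psd_Lam[OF q p] by blast
  then have nonneg: "0 \<le> (\<Sum>u\<in>UNIV. t * w u * s u)" if "s \<in> Scone g d m q" for s t
    using that unfolding Sdual_def mem_Collect_eq by (rule bspec)
  show "(\<Sum>u\<in>UNIV. w u * s u) = 0" if "s \<in> Scone g d m q" for s
    using nonneg[OF that, of 1] nonneg[OF that, of "-1"] by (simp add: sum_negf)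
qed

lemma pd_form_Lam_i:
  assumes g: "is_poly (g i)" "g i \<noteq> (\<lambda>z. 0)"
    and q: "is_basis_fun q (Vspace g d m)" and p: "\<forall>i<m. is_basis_list (p i) (poly_deg_le (d i))"
    and i: "i < m" and x: "x \<in> interior (Sdual g d m q)"
  shows "pd_form (length (p i)) (entries (Lam_i g p q i x))"
  unfolding pd_form_def
proof (intro allI impI)
  fix v :: "nat \<Rightarrow> real"
  assume "\<exists>j<length (p i). v j \<noteq> 0"
  define h where "h = (\<lambda>z. \<Sum>j<length (p i). v j * (p i ! j) z)"
  define F where "F = (\<lambda>z. g i z * (h z)\<^sup>2)"
  have h: "poly_deg_le (d i) h"
    unfolding h_def by (intro poly_deg_le_sum poly_deg_le_cmult basis_elems_deg[OF p i]) simp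
  have h_nz: "h \<noteq> (\<lambda>z. 0)"
  proof
    assume "h = (\<lambda>z. 0)"
    then have "\<forall>j<length (p i). v j = 0"
      using p i unfolding is_basis_list_def h_def by blast
    then show False using \<open>\<exists>j<length (p i). v j \<noteq> 0\<close> by auto
  qed
  obtain e where "poly_deg_le e (g i)" using g(1) is_poly_def by blast
  then have gh: "is_poly (\<lambda>z. g i z * h z)" using poly_deg_le_mult[OF _ h] is_poly_def by blast
  have h_poly: "is_poly h" using h is_poly_def by blast
  have "(\<lambda>z. g i z * h z) \<noteq> (\<lambda>z. 0)" by (rule is_poly_mult_nonzero[OF g(1) h_poly g(2) h_nz])
  then have "(\<lambda>z. (g i z * h z) * h z) \<noteq> (\<lambda>z. 0)" by (rule is_poly_mult_nonzero[OF gh h_poly _ h_nz])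
  then have F_nz: "F \<noteq> (\<lambda>z. 0)" unfolding F_def by (simp add: power2_eq_square mult.assoc)
  have FV: "F \<in> Vspace g d m"
    unfolding F_def by (rule weighted_poly_in_Vspace[where g=g and d=d, OF i poly_deg_le_square[OF h]])
  have "coords q F \<noteq> (\<lambda>u. 0)"
  proof
    assume "coords q F = (\<lambda>u. 0)"
    then have "F = poly_of q (\<lambda>u. 0)" using poly_of_coords[OF q FV] by simp
    then show False using F_nz by (simp add: poly_of_def)
  qed
  moreover have "coords q F \<in> Scone g d m q"
    unfolding F_def by (rule weighted_square_in_Scone[OF q i h])
  ultimately have "0 < (\<Sum>u\<in>UNIV. x u * coords q F u)"
    by (intro interior_dual_cone_pos[OF x[unfolded Sdual_def]])
  then show "0 < quad_form (length (p i)) (entries (Lam_i g p q i x)) v"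
    unfolding quad_form_Lam_i[OF q p i] dual_value_def F_def h_def .
qed

lemma pd_form_Lam:
  assumes "\<forall>i<m. is_poly (g i) \<and> g i \<noteq> (\<lambda>z. 0)"
    and "is_basis_fun q (Vspace g d m)" "\<forall>i<m. is_basis_list (p i) (poly_deg_le (d i))"
    and "x \<in> interior (Sdual g d m q)"
  shows "pd_form (Lam_dim p m) (entries (Lam g p q m x))"
  unfolding Lam_def using assms
  by (intro pd_form_diag_block_mat Lam_i_carrier pd_form_Lam_i) auto

section \<open>The Hessian\<close>

text \<open>The pairing \<open>\<langle>E, M A M\<rangle> = tr(E\<^sup>T M A M)\<close>, written out entrywise.\<close>
definition frob_congr :: "nat \<Rightarrow> (nat \<Rightarrow> nat \<Rightarrow> real) \<Rightarrow> (nat \<Rightarrow> nat \<Rightarrow> real)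
    \<Rightarrow> (nat \<Rightarrow> nat \<Rightarrow> real) \<Rightarrow> real" where
  "frob_congr n E M A = (\<Sum>i<n. \<Sum>j<n. E j i * (\<Sum>l<n. (\<Sum>k<n. M j k * A k l) * M l i))"

lemma sum_mult_lincomb:
  "(\<Sum>a\<in>S. f a * (\<Sum>v\<in>U. w v * g v a)) = (\<Sum>v\<in>U. w v * (\<Sum>a\<in>S. f a * (g v a :: real)))"
proof -
  have "(\<Sum>a\<in>S. f a * (\<Sum>v\<in>U. w v * g v a)) = (\<Sum>a\<in>S. \<Sum>v\<in>U. w v * (f a * g v a))"
    by (simp add: sum_distrib_left mult_ac)
  also have "\<dots> = (\<Sum>v\<in>U. \<Sum>a\<in>S. w v * (f a * g v a))" by (rule sum.swap)
  finally show ?thesis by (simp add: sum_distrib_left)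
qed

lemma sum2_mult_lincomb:
  "(\<Sum>a\<in>S. \<Sum>b\<in>T. f a b * (\<Sum>v\<in>U. w v * g v a b))
    = (\<Sum>v\<in>U. w v * (\<Sum>a\<in>S. \<Sum>b\<in>T. f a b * (g v a b :: real)))"
proof -
  have "(\<Sum>a\<in>S. \<Sum>b\<in>T. f a b * (\<Sum>v\<in>U. w v * g v a b))
      = (\<Sum>a\<in>S. 1 * (\<Sum>v\<in>U. w v * (\<Sum>b\<in>T. f a b * g v a b)))"
    by (rule sum.cong[OF refl], subst sum_mult_lincomb, simp)
  also have "\<dots> = (\<Sum>v\<in>U. w v * (\<Sum>a\<in>S. 1 * (\<Sum>b\<in>T. f a b * g v a b)))"
    by (rule sum_mult_lincomb)
  finally show ?thesis by simp
qed

lemma frob_congr_lincomb_left: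
  "frob_congr n (\<lambda>j i. \<Sum>u\<in>U. w u * E u j i) M A = (\<Sum>u\<in>U. w u * frob_congr n (E u) M A)"
  unfolding frob_congr_def
  using sum2_mult_lincomb[of "\<lambda>i j. \<Sum>l<n. (\<Sum>k<n. M j k * A k l) * M l i" w "\<lambda>u i j. E u j i"]
  by (simp add: mult.commute)

lemma frob_congr_lincomb_right:
  "frob_congr n E M (\<lambda>k l. \<Sum>v\<in>U. w v * A v k l) = (\<Sum>v\<in>U. w v * frob_congr n E M (A v))"
proof -
  have inner: "(\<Sum>l<n. (\<Sum>k<n. M j k * (\<Sum>v\<in>U. w v * A v k l)) * M l i)
      = (\<Sum>v\<in>U. w v * (\<Sum>l<n. (\<Sum>k<n. M j k * A v k l) * M l i))" for i j
  proof -
    have "(\<Sum>l<n. (\<Sum>k<n. M j k * (\<Sum>v\<in>U. w v * A v k l)) * M l i)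
        = (\<Sum>l<n. M l i * (\<Sum>v\<in>U. w v * (\<Sum>k<n. M j k * A v k l)))"
      by (rule sum.cong[OF refl], subst sum_mult_lincomb, simp)
    also have "\<dots> = (\<Sum>v\<in>U. w v * (\<Sum>l<n. M l i * (\<Sum>k<n. M j k * A v k l)))"
      by (rule sum_mult_lincomb)
    finally show ?thesis by (simp add: mult.commute)
  qed
  show ?thesis unfolding frob_congr_def inner by (rule sum2_mult_lincomb)
qed

lemma frob_congr_cong:
  "(\<And>k l. k < n \<Longrightarrow> l < n \<Longrightarrow> E k l = E' k l) \<Longrightarrow> (\<And>k l. k < n \<Longrightarrow> l < n \<Longrightarrow> A k l = A' k l)
    \<Longrightarrow> frob_congr n E M A = frob_congr n E' M A'"
  unfolding frob_congr_def by (intro sum.cong refl) auto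

lemma index_mult_mat_sum:
  "A \<in> carrier_mat n k \<Longrightarrow> B \<in> carrier_mat k p \<Longrightarrow> i < n \<Longrightarrow> j < p
    \<Longrightarrow> (A * B) $$ (i, j) = (\<Sum>l<k. A $$ (i, l) * B $$ (l, j))"
  by (auto simp: scalar_prod_def atLeast0LessThan intro!: sum.cong)

lemma trace_eq_frob_congr:
  assumes E: "E \<in> carrier_mat n n" and M: "M \<in> carrier_mat n n" and A: "A \<in> carrier_mat n n"
  shows "trace_mat (transpose_mat E * (M * A * M)) = frob_congr n (entries E) (entries M) (entries A)"
proof -
  have MA: "M * A \<in> carrier_mat n n" and MAM: "M * A * M \<in> carrier_mat n n"
    and tE: "transpose_mat E \<in> carrier_mat n n" using E M A by auto
  have "trace_mat (transpose_mat E * (M * A * M)) = (\<Sum>i<n. (transpose_mat E * (M * A * M)) $$ (i, i))"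
    unfolding trace_mat_def using tE MAM by simp
  also have "\<dots> = (\<Sum>i<n. \<Sum>j<n. E $$ (j, i) * (\<Sum>l<n. (\<Sum>k<n. M $$ (j, k) * A $$ (k, l)) * M $$ (l, i)))"
  proof (rule sum.cong[OF refl])
    fix i assume i: "i \<in> {..<n}"
    have "(transpose_mat E * (M * A * M)) $$ (i, i) = (\<Sum>j<n. transpose_mat E $$ (i, j) * (M * A * M) $$ (j, i))"
      using index_mult_mat_sum[OF tE MAM] i by simp
    also have "\<dots> = (\<Sum>j<n. E $$ (j, i) * (\<Sum>l<n. (\<Sum>k<n. M $$ (j, k) * A $$ (k, l)) * M $$ (l, i)))"
    proof (rule sum.cong[OF refl])
      fix j assume j: "j \<in> {..<n}"
      have "(M * A * M) $$ (j, i) = (\<Sum>l<n. (M * A) $$ (j, l) * M $$ (l, i))"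
        using index_mult_mat_sum[OF MA M] i j by simp
      also have "\<dots> = (\<Sum>l<n. (\<Sum>k<n. M $$ (j, k) * A $$ (k, l)) * M $$ (l, i))"
        using index_mult_mat_sum[OF M A] j by (intro sum.cong refl) simp
      finally show "transpose_mat E $$ (i, j) * (M * A * M) $$ (j, i)
          = E $$ (j, i) * (\<Sum>l<n. (\<Sum>k<n. M $$ (j, k) * A $$ (k, l)) * M $$ (l, i))"
        using E i j by simp
    qed
    finally show "(transpose_mat E * (M * A * M)) $$ (i, i)
        = (\<Sum>j<n. E $$ (j, i) * (\<Sum>l<n. (\<Sum>k<n. M $$ (j, k) * A $$ (k, l)) * M $$ (l, i)))" .
  qed
  finally show ?thesis unfolding frob_congr_def entries_def .
qed

lemma swap_mult_sums:
  "(\<Sum>l<n. (\<Sum>k<n. M k * A k l) * r l) = (\<Sum>k<n. M k * (\<Sum>l<n. A k l * (r l :: real)))"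
proof -
  have "(\<Sum>l<n. (\<Sum>k<n. M k * A k l) * r l) = (\<Sum>l<n. \<Sum>k<n. M k * (A k l * r l))"
    by (simp add: sum_distrib_right mult.assoc)
  also have "\<dots> = (\<Sum>k<n. \<Sum>l<n. M k * (A k l * r l))" by (rule sum.swap)
  finally show ?thesis by (simp add: sum_distrib_left)
qed

lemma frob_congr_self_gram:
  assumes R: "\<forall>l<n. \<forall>i<n. M l i = (\<Sum>b<n. R b l * R b i)"
  shows "frob_congr n A M A = (\<Sum>b<n. quad_form n M (\<lambda>j. \<Sum>i<n. A j i * R b i))"
proof -
  define y where "y b j = (\<Sum>i<n. A j i * R b i)" for b j
  define z where "z b j = (\<Sum>k<n. M j k * y b k)" for b j
  have inner: "(\<Sum>l<n. (\<Sum>k<n. M j k * A k l) * M l i) = (\<Sum>b<n. R b i * z b j)" if "i < n" for i j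
  proof -
    have "(\<Sum>l<n. (\<Sum>k<n. M j k * A k l) * M l i)
        = (\<Sum>l<n. (\<Sum>k<n. M j k * A k l) * (\<Sum>b<n. R b i * R b l))"
      using R that by (intro sum.cong refl) (simp add: mult.commute)
    also have "\<dots> = (\<Sum>b<n. R b i * (\<Sum>l<n. (\<Sum>k<n. M j k * A k l) * R b l))"
      by (rule sum_mult_lincomb)
    also have "\<dots> = (\<Sum>b<n. R b i * z b j)"
      unfolding z_def y_def by (simp add: swap_mult_sums)
    finally show ?thesis .
  qed
  have "frob_congr n A M A = (\<Sum>i<n. \<Sum>j<n. \<Sum>b<n. (A j i * R b i) * z b j)"
    unfolding frob_congr_def
    by (intro sum.cong refl) (simp add: inner sum_distrib_left mult.assoc)
  also have "\<dots> = (\<Sum>j<n. \<Sum>i<n. \<Sum>b<n. (A j i * R b i) * z b j)" by (rule sum.swap)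
  also have "\<dots> = (\<Sum>j<n. \<Sum>b<n. \<Sum>i<n. (A j i * R b i) * z b j)"
    by (rule sum.cong[OF refl], rule sum.swap)
  also have "\<dots> = (\<Sum>b<n. \<Sum>j<n. \<Sum>i<n. (A j i * R b i) * z b j)" by (rule sum.swap)
  also have "\<dots> = (\<Sum>b<n. \<Sum>j<n. y b j * z b j)"
    by (simp add: y_def sum_distrib_right)
  also have "\<dots> = (\<Sum>b<n. quad_form n M (y b))"
    unfolding quad_form_def z_def by (simp add: sum_distrib_left mult_ac)
  finally show ?thesis unfolding y_def .
qed

text \<open>Each summand of \<open>frob_congr_self_gram\<close> vanishes, so \<open>R A = 0\<close>; then \<open>A u\<close> is
  \<open>M\<close>-null for every \<open>u\<close>.\<close>
lemma frob_congr_self_eq_0: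
  assumes pM: "pd_form n M" and sA: "sym_form n A"
    and R: "\<forall>l<n. \<forall>i<n. M l i = (\<Sum>b<n. R b l * R b i)"
    and z: "frob_congr n A M A = 0" and ij: "i < n" "j < n"
  shows "A i j = 0"
proof -
  let ?Q = "\<lambda>b. quad_form n M (\<lambda>j. \<Sum>i<n. A j i * R b i)"
  have "0 \<le> ?Q b" for b
    using pd_form_imp_psd_form[OF pM] unfolding psd_form_def ..
  moreover have "(\<Sum>b<n. ?Q b) = 0" using z frob_congr_self_gram[OF R] by simp
  ultimately have "?Q b = 0" if "b < n" for b
    using that by (simp add: sum_nonneg_eq_0_iff)
  then have RA: "(\<Sum>i<n. A j i * R b i) = 0" if "b < n" "j < n" for b j
    using pd_form_quad_form_eq_0[OF pM] that by blast
  have "(\<Sum>k<n. R b k * (\<Sum>l<n. A k l * u l)) = 0" if "b < n" for u b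
  proof -
    have "(\<Sum>k<n. R b k * (\<Sum>l<n. A k l * u l)) = (\<Sum>k<n. \<Sum>l<n. R b k * A k l * u l)"
      by (simp add: sum_distrib_left mult.assoc)
    also have "\<dots> = (\<Sum>l<n. \<Sum>k<n. R b k * A k l * u l)" by (rule sum.swap)
    also have "\<dots> = (\<Sum>l<n. u l * (\<Sum>k<n. A l k * R b k))"
      using sA unfolding sym_form_def by (intro sum.cong refl) (auto simp: sum_distrib_left mult_ac)
    also have "\<dots> = 0" using RA[OF that] by simp
    finally show ?thesis .
  qed
  then have "quad_form n M (\<lambda>k. \<Sum>l<n. A k l * u l) = 0" for u
    using quad_form_gram[OF R] by simp
  then have "(\<Sum>l<n. A i l * u l) = 0" for u
    by (rule pd_form_quad_form_eq_0[OF pM _ ij(1)])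
  from this[of "\<lambda>l. if l = j then 1 else 0"] show ?thesis
    using sum_unit_mult[OF ij(2), of "A i"] by (simp add: mult.commute)
qed

lemma Hop_eq_frob_congr:
  assumes "pd_form (Lam_dim p m) (entries (Lam g p q m x))"
  shows "Hop g p q m x w u = frob_congr (Lam_dim p m) (entries (Lam g p q m (unit_coord u)))
    (entries (minv (Lam g p q m x))) (entries (Lam g p q m w))"
  unfolding Hop_def Lam_adj_def
  by (rule trace_eq_frob_congr[OF Lam_carrier minv_pd_form(1)[OF Lam_carrier assms] Lam_carrier])

lemma Hop_lincomb:
  assumes pd: "pd_form (Lam_dim p m) (entries (Lam g p q m x))"
  shows "Hop g p q m x w u = (\<Sum>v\<in>UNIV. w v * Hop g p q m x (unit_coord v) u)"
proof -
  have "Hop g p q m x w u = frob_congr (Lam_dim p m) (entries (Lam g p q m (unit_coord u)))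
      (entries (minv (Lam g p q m x))) (\<lambda>k l. \<Sum>v\<in>UNIV. w v * entries (Lam g p q m (unit_coord v)) k l)"
    unfolding Hop_eq_frob_congr[OF pd]
    by (intro frob_congr_cong) (simp_all add: entries_def Lam_entry_lincomb[where x=w])
  then show ?thesis
    unfolding frob_congr_lincomb_right Hop_eq_frob_congr[OF pd] .
qed

lemma Hop_eq_0_imp_eq_0:
  assumes g: "\<forall>i<m. is_poly (g i) \<and> g i \<noteq> (\<lambda>z. 0)" and proper: "proper_cone (Scone g d m q)"
    and q: "is_basis_fun q (Vspace g d m)" and p: "\<forall>i<m. is_basis_list (p i) (poly_deg_le (d i))"
    and x: "x \<in> interior (Sdual g d m q)" and z: "Hop g p q m x w = (\<lambda>u. 0)"
  shows "w = (\<lambda>u. 0)"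
proof (rule Lam_eq_0_imp_eq_0[OF q p proper])
  let ?N = "Lam_dim p m" and ?L = "Lam g p q m x"
  let ?M = "entries (minv ?L)" and ?A = "entries (Lam g p q m w)"
  have pd: "pd_form ?N (entries ?L)" by (rule pd_form_Lam[OF g q p x])
  note inv = minv_pd_form[OF Lam_carrier pd]
  have tM: "transpose_mat (minv ?L) = minv ?L"
    by (rule inverse_of_symmetric_symmetric[OF Lam_carrier inv transpose_Lam])
  have pM: "pd_form ?N ?M" by (rule pd_form_inverse[OF Lam_carrier pd inv(1,2) transpose_Lam])
  have sM: "sym_form ?N ?M" using tM transpose_eq_iff_sym_form[OF inv(1)] by blast
  obtain R where R: "\<forall>i<?N. \<forall>j<?N. ?M i j = (\<Sum>a<?N. R a i * R a j)"
    using psd_form_gram[OF sM pd_form_imp_psd_form[OF pM]] by blast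
  have "0 = (\<Sum>u\<in>UNIV. w u * Hop g p q m x w u)" using z by simp
  also have "\<dots> = frob_congr ?N (\<lambda>j i. \<Sum>u\<in>UNIV. w u * entries (Lam g p q m (unit_coord u)) j i) ?M ?A"
    unfolding Hop_eq_frob_congr[OF pd] frob_congr_lincomb_left ..
  also have "\<dots> = frob_congr ?N ?A ?M ?A"
    by (intro frob_congr_cong) (simp_all add: entries_def Lam_entry_lincomb[where x=w])
  finally have "frob_congr ?N ?A ?M ?A = 0" ..
  from frob_congr_self_eq_0[OF pM sym_form_Lam R this]
  show "Lam g p q m w $$ (r, c) = 0" if "r < ?N" "c < ?N" for r c
    using that by (simp add: entries_def)
qed

lemma ex1_solution_linear_system:
  fixes K :: "'u::finite \<Rightarrow> 'u \<Rightarrow> real"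
  assumes inj: "\<And>w. (\<lambda>u. \<Sum>v\<in>UNIV. w v * K u v) = (\<lambda>u. 0) \<Longrightarrow> w = (\<lambda>u. 0)"
  shows "\<exists>!w. (\<lambda>u. \<Sum>v\<in>UNIV. w v * K u v) = s"
proof -
  define T where "T y = (\<chi> u. \<Sum>v\<in>UNIV. y $ v * K u v)" for y :: "real^'u"
  have lin: "linear T"
    by (rule linearI)
       (simp_all add: T_def Finite_Cartesian_Product.vec_eq_iff distrib_right sum.distrib sum_distrib_left mult.assoc)
  have "inj T"
    unfolding linear_injective_0[OF lin]
  proof (intro allI impI)
    fix y :: "real^'u" assume "T y = 0"
    then have "(\<lambda>u. \<Sum>v\<in>UNIV. y $ v * K u v) = (\<lambda>u. 0)"
      by (simp add: T_def Finite_Cartesian_Product.vec_eq_iff fun_eq_iff)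
    then have "(\<lambda>v. y $ v) = (\<lambda>u. 0)" by (rule inj)
    then show "y = 0" by (simp add: Finite_Cartesian_Product.vec_eq_iff fun_eq_iff)
  qed
  then have "surj T" by (rule linear_inj_imp_surj[OF lin])
  from surjD[OF this, of "\<chi> u. s u"] obtain y where "(\<chi> u. s u) = T y" by blast
  then have y: "(\<lambda>u. \<Sum>v\<in>UNIV. y $ v * K u v) = s"
    by (simp add: T_def Finite_Cartesian_Product.vec_eq_iff fun_eq_iff)
  have "w = (\<lambda>v. y $ v)" if "(\<lambda>u. \<Sum>v\<in>UNIV. w v * K u v) = s" for w
  proof -
    have "(\<lambda>u. \<Sum>v\<in>UNIV. (w v - y $ v) * K u v) = (\<lambda>u. 0)"
      using that y by (simp add: fun_eq_iff left_diff_distrib sum_subtractf)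
    then have "(\<lambda>v. w v - y $ v) = (\<lambda>u. 0)" by (rule inj)
    then show ?thesis by (simp add: fun_eq_iff)
  qed
  then show ?thesis using y by blast
qed

lemma Hop_Hinv:
  assumes g: "\<forall>i<m. is_poly (g i) \<and> g i \<noteq> (\<lambda>z. 0)" and proper: "proper_cone (Scone g d m q)"
    and q: "is_basis_fun q (Vspace g d m)" and p: "\<forall>i<m. is_basis_list (p i) (poly_deg_le (d i))"
    and x: "x \<in> interior (Sdual g d m q)"
  shows "Hop g p q m x (Hinv g p q m x s) = s"
proof -
  have pd: "pd_form (Lam_dim p m) (entries (Lam g p q m x))" by (rule pd_form_Lam[OF g q p x])
  define K where "K u v = Hop g p q m x (unit_coord v) u" for u v
  have H: "Hop g p q m x w = (\<lambda>u. \<Sum>v\<in>UNIV. w v * K u v)" for w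
    unfolding K_def by (rule ext, rule Hop_lincomb[OF pd])
  have "\<exists>!w. Hop g p q m x w = s"
    unfolding H
  proof (rule ex1_solution_linear_system)
    fix w assume "(\<lambda>u. \<Sum>v\<in>UNIV. w v * K u v) = (\<lambda>u. 0)"
    then have "Hop g p q m x w = (\<lambda>u. 0)" unfolding H .
    then show "w = (\<lambda>u. 0)" by (rule Hop_eq_0_imp_eq_0[OF g proper q p x])
  qed
  then show ?thesis unfolding Hinv_def by (rule theI')
qed

theorem theorem1:
  fixes g :: "nat \<Rightarrow> ('n::finite \<Rightarrow> real) \<Rightarrow> real"
    and d :: "nat \<Rightarrow> nat" and m :: nat
    and q :: "'u::finite \<Rightarrow> ('n \<Rightarrow> real) \<Rightarrow> real"
    and p :: "nat \<Rightarrow> (('n \<Rightarrow> real) \<Rightarrow> real) list"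
    and x s :: "'u \<Rightarrow> real"
  assumes g_poly: "\<forall>i<m. is_poly (g i) \<and> g i \<noteq> (\<lambda>z. 0)"
    and proper: "proper_cone (Scone g d m q)"
    and q_basis: "is_basis_fun q (Vspace g d m)"
    and p_basis: "\<forall>i<m. is_basis_list (p i) (poly_deg_le (d i))"
    and x_int: "x \<in> interior (Sdual g d m q)"
  shows "Lam_adj g p q m (Smat g p q m x s) = s \<and>
         (s \<in> Scone g d m q \<longrightarrow>
            (Hinv g p q m x s \<in> Sdual g d m q \<longleftrightarrow> psd (Smat g p q m x s)))"
proof (intro conjI impI)
  show "Lam_adj g p q m (Smat g p q m x s) = s"
    using Hop_Hinv[OF g_poly proper q_basis p_basis x_int] unfolding Smat_def Hop_def .
  have pd: "pd_form (Lam_dim p m) (entries (Lam g p q m x))"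
    by (rule pd_form_Lam[OF g_poly q_basis p_basis x_int])
  note inv = minv_pd_form[OF Lam_carrier pd]
  have "Hinv g p q m x s \<in> Sdual g d m q \<longleftrightarrow> psd (Lam g p q m (Hinv g p q m x s))"
    by (rule Sdual_iff_psd_Lam[OF q_basis p_basis])
  also have "\<dots> \<longleftrightarrow> psd (Smat g p q m x s)"
    unfolding Smat_def
    by (rule psd_congruence_iff[OF Lam_carrier inv(1) Lam_carrier inv(2,3) transpose_Lam
          inverse_of_symmetric_symmetric[OF Lam_carrier inv transpose_Lam], symmetric])
  finally show "Hinv g p q m x s \<in> Sdual g d m q \<longleftrightarrow> psd (Smat g p q m x s)" .
qed

end
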